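(* Let $b>0$, $N\ge1$, $R>0$ and vectors $\Phi_0,\Psi_0,\Psi_b\in\mathbb{R}^N$ be given, and let $$G_1=G_1(R,\Phi_0,\Psi_0,\Psi_b)=\big\{Q=(q_0,\dots,q_{N-1})^T\in H^2(0,b):\ \|Q\|_{H^2(0,b)}<R,\ Q(0)=\Phi_0,\ Q'(0)=\Psi_0,\ Q'(b)=\Psi_b\big\}.$$ For $\lambda>1$ let $\varphi_\lambda(x)=e^{-\lambda x}$ and $$\overline{J}_\lambda(Q)=\int_0^b\big|Q''+F(Q')\big|^2\varphi_\lambda^2(x)\,dx .$$ Then there exists a sufficiently large number $\lambda_2=\lambda_2(G_1,F)>1$, depending only on $G_1$ and $F$, such that for all $\lambda\ge\lambda_2$ the functional $\overline{J}_\lambda$ is strictly convex on $G_1$, i.e., there exists a constant $C_3=C_3(G_1,F)>0$ depending only on $G_1$ and $F$ such that for all $Q_1,Q_2\in G_1$ $$\overline{J}_\lambda(Q_2)-\overline{J}_\lambda(Q_1)-\overline{J}'_\lambda(Q_1)(Q_2-Q_1)\ge C_3e^{-2\lambda b}\|Q_2-Q_1\|^2_{H^2(0,b)},$$ where $\overline{J}'_\lambda(Q_1)$ is the Fréchet derivative of $\overline{J}_\lambda$ at $Q_1$.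
   Context: For a vector function $Q=(q_0,\dots,q_{N-1})$, $\|Q\|_{H^2(0,b)}=(\sum_n\|q_n\|^2_{H^2(0,b)})^{1/2}$ and $|\cdot|$ is the Euclidean norm in $\mathbb{R}^N$. Nonlinearity: fix $\underline{s}>0$; let $L_n(s)=e^{-s/2}\sum_{k=0}^n(-1)^k\binom{n}{k}\frac{s^k}{k!}$ (Laguerre functions) and $f_n(s)=L_n(s-\underline{s})$ for $s>\underline{s}$. For $k,m,n\in\{0,\dots,N-1\}$, $$F_{kmn}=\int_{\underline{s}}^\infty 2sf_k(s)\Big(\int_s^\infty f_m(\tau)d\tau\int_s^\infty f_n(\tau)d\tau\Big)ds-\int_{\underline{s}}^\infty 2s^2f_k(s)f_m(s)\Big(\int_s^\infty f_n(\tau)d\tau\Big)ds,$$ and $F=(F_0,\dots,F_{N-1}):\mathbb{R}^N\to\mathbb{R}^N$, $F_k(Q')=\sum_{m,n=0}^{N-1}F_{kmn}q_m'q_n'$. The Fréchet derivative is taken with respect to perturbations $h\in H^2(0,b)$ with $h(0)=h'(0)=h'(b)=0$. *)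

theory Defs
  imports "HOL-Analysis.Analysis"
begin

definition laguerre :: "nat \<Rightarrow> real \<Rightarrow> real" where
  "laguerre n s = exp (- s / 2) * (\<Sum>k\<le>n. (-1) ^ k * real (n choose k) * s ^ k / fact k)"

definition fL :: "real \<Rightarrow> nat \<Rightarrow> real \<Rightarrow> real" where
  "fL sl n s = laguerre n (s - sl)"

definition tailL :: "real \<Rightarrow> nat \<Rightarrow> real \<Rightarrow> real" where
  "tailL sl n s = (LBINT t:{s..}. fL sl n t)"

definition Fcoef :: "real \<Rightarrow> nat \<Rightarrow> nat \<Rightarrow> nat \<Rightarrow> real" where
  "Fcoef sl k m n =
     (LBINT s:{sl<..}. 2 * s * fL sl k s * (tailL sl m s * tailL sl n s))
   - (LBINT s:{sl<..}. 2 * s ^ 2 * fL sl k s * fL sl m s * tailL sl n s)"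

definition Fnl :: "real \<Rightarrow> nat \<Rightarrow> (nat \<Rightarrow> real) \<Rightarrow> nat \<Rightarrow> real" where
  "Fnl sl N p k = (\<Sum>m<N. \<Sum>n<N. Fcoef sl k m n * p m * p n)"

text \<open>Scalar functions on [0,b] are represented by functions real => real that vanish
  outside [0,b] (continuous representative on [0,b]). The first derivative is the
  derivative within [0,b]; the second derivative is any L^2 function whose indefinite
  integral is the first derivative (unique a.e.).\<close>

definition d1 :: "real \<Rightarrow> (real \<Rightarrow> real) \<Rightarrow> real \<Rightarrow> real" where
  "d1 b q x = vector_derivative q (at x within {0..b})"

definition is_d2 :: "real \<Rightarrow> (real \<Rightarrow> real) \<Rightarrow> (real \<Rightarrow> real) \<Rightarrow> bool" where
  "is_d2 b q g \<longleftrightarrow>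
     (\<forall>x\<in>{0..b}. (g has_integral (d1 b q x - d1 b q 0)) {0..x}) \<and>
     (\<lambda>x. (g x)\<^sup>2) integrable_on {0..b}"

definition d2 :: "real \<Rightarrow> (real \<Rightarrow> real) \<Rightarrow> real \<Rightarrow> real" where
  "d2 b q = (SOME g. is_d2 b q g)"

definition H2 :: "real \<Rightarrow> (real \<Rightarrow> real) \<Rightarrow> bool" where
  "H2 b q \<longleftrightarrow>
     (\<forall>x. x \<notin> {0..b} \<longrightarrow> q x = 0) \<and>
     (\<forall>x\<in>{0..b}. (q has_vector_derivative d1 b q x) (at x within {0..b})) \<and>
     (\<exists>g. is_d2 b q g)"

definition H2vec :: "real \<Rightarrow> nat \<Rightarrow> (nat \<Rightarrow> real \<Rightarrow> real) \<Rightarrow> bool" where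
  "H2vec b N Q \<longleftrightarrow> (\<forall>n<N. H2 b (Q n)) \<and> (\<forall>n\<ge>N. Q n = (\<lambda>x. 0))"

definition H2norm :: "real \<Rightarrow> nat \<Rightarrow> (nat \<Rightarrow> real \<Rightarrow> real) \<Rightarrow> real" where
  "H2norm b N Q =
     sqrt (\<Sum>n<N. integral {0..b} (\<lambda>x. (Q n x)\<^sup>2 + (d1 b (Q n) x)\<^sup>2 + (d2 b (Q n) x)\<^sup>2))"

definition G1 :: "real \<Rightarrow> nat \<Rightarrow> real \<Rightarrow> (nat \<Rightarrow> real) \<Rightarrow> (nat \<Rightarrow> real) \<Rightarrow> (nat \<Rightarrow> real)
                   \<Rightarrow> (nat \<Rightarrow> real \<Rightarrow> real) set" where
  "G1 b N R Phi0 Psi0 Psib =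
     {Q. H2vec b N Q \<and> H2norm b N Q < R \<and>
         (\<forall>n<N. Q n 0 = Phi0 n \<and> d1 b (Q n) 0 = Psi0 n \<and> d1 b (Q n) b = Psib n)}"

definition H0vec :: "real \<Rightarrow> nat \<Rightarrow> (nat \<Rightarrow> real \<Rightarrow> real) \<Rightarrow> bool" where
  "H0vec b N h \<longleftrightarrow> H2vec b N h \<and>
     (\<forall>n<N. h n 0 = 0 \<and> d1 b (h n) 0 = 0 \<and> d1 b (h n) b = 0)"

definition Jbar :: "real \<Rightarrow> real \<Rightarrow> nat \<Rightarrow> real \<Rightarrow> (nat \<Rightarrow> real \<Rightarrow> real) \<Rightarrow> real" where
  "Jbar sl b N lam Q =
     integral {0..b} (\<lambda>x.
        (\<Sum>k<N. (d2 b (Q k) x + Fnl sl N (\<lambda>m. d1 b (Q m) x) k)\<^sup>2) * (exp (- lam * x))\<^sup>2)"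

definition vadd :: "(nat \<Rightarrow> real \<Rightarrow> real) \<Rightarrow> (nat \<Rightarrow> real \<Rightarrow> real) \<Rightarrow> nat \<Rightarrow> real \<Rightarrow> real" where
  "vadd P Q = (\<lambda>n x. P n x + Q n x)"

definition vdiff :: "(nat \<Rightarrow> real \<Rightarrow> real) \<Rightarrow> (nat \<Rightarrow> real \<Rightarrow> real) \<Rightarrow> nat \<Rightarrow> real \<Rightarrow> real" where
  "vdiff P Q = (\<lambda>n x. P n x - Q n x)"

definition frechet_H0 :: "real \<Rightarrow> nat \<Rightarrow> ((nat \<Rightarrow> real \<Rightarrow> real) \<Rightarrow> real)
      \<Rightarrow> (nat \<Rightarrow> real \<Rightarrow> real) \<Rightarrow> ((nat \<Rightarrow> real \<Rightarrow> real) \<Rightarrow> real) \<Rightarrow> bool" where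
  "frechet_H0 b N J Q L \<longleftrightarrow>
     (\<forall>h1 h2 a c. H0vec b N h1 \<longrightarrow> H0vec b N h2 \<longrightarrow>
        L (\<lambda>n x. a * h1 n x + c * h2 n x) = a * L h1 + c * L h2) \<and>
     (\<exists>K. \<forall>h. H0vec b N h \<longrightarrow> \<bar>L h\<bar> \<le> K * H2norm b N h) \<and>
     (\<forall>\<epsilon>>0. \<exists>\<delta>>0. \<forall>h. H0vec b N h \<longrightarrow> H2norm b N h < \<delta> \<longrightarrow>
        \<bar>J (vadd Q h) - J Q - L h\<bar> \<le> \<epsilon> * H2norm b N h)"

end

theory Submission
  imports Defs
begin

text \<open>Let h = Q2 - Q1, so h(0) = h'(0) = h'(b) = 0. Since F is quadratic, J(Q1 + h) - J(Q1) - J'(Q1) h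
  is the weighted integral of |h'' + DF(Q1') h' + F(h')|^2 + 2 (Q1'' + F(Q1')) \<cdot> F(h').
  The Carleman estimate |h'(x)|^2 e^{-2\<lambda>x} \<le> (2\<lambda>)^{-1} \<integral> |h''|^2 e^{-2\<lambda>t} shows that every term
  containing h' is at most C/\<lambda> times S = \<integral> |h''|^2 e^{-2\<lambda>x}, where C depends only on G1 and F
  (membership in G1 bounds Q' uniformly and Q'' in L^2). So the remainder is at least S/2 - C S/\<lambda> \<ge> S/4
  for large \<lambda>, and S \<ge> e^{-2\<lambda>b} \<integral> |h''|^2 \<ge> e^{-2\<lambda>b} \<parallel>h\<parallel>^2 / (1 + b^2 + b^4) by a Poincar\'e
  inequality. The same expansion with |h'| \<le> \<surd>b \<parallel>h\<parallel> makes the remainder O(\<parallel>h\<parallel>^2), so J'(Q1) is the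
  Fr\'echet derivative, unique on the cone of admissible perturbations.\<close>

definition square_integrable :: "real set \<Rightarrow> (real \<Rightarrow> real) \<Rightarrow> bool" where
  "square_integrable S f \<longleftrightarrow>
     f \<in> borel_measurable (lebesgue_on S) \<and> (\<lambda>x. (f x)\<^sup>2) integrable_on S"

lemma square_integrable_integrable_sq:
  "square_integrable S f \<Longrightarrow> (\<lambda>x. (f x)\<^sup>2) integrable_on S"
  unfolding square_integrable_def by blast

lemma square_integrable_mult_integrable:
  assumes "square_integrable S f" "square_integrable S g" "S \<in> sets lebesgue"
  shows "(\<lambda>x. f x * g x) integrable_on S"
proof -
  have "(\<lambda>x. f x * g x) absolutely_integrable_on S"
  proof (rule measurable_bounded_by_integrable_imp_absolutely_integrable)
    show "(\<lambda>x. f x * g x) \<in> borel_measurable (lebesgue_on S)"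
      using assms unfolding square_integrable_def by (intro borel_measurable_times) auto
    show "(\<lambda>x. (f x)\<^sup>2 + (g x)\<^sup>2) integrable_on S"
      using assms unfolding square_integrable_def by (intro integrable_add) auto
    show "norm (f x * g x) \<le> (f x)\<^sup>2 + (g x)\<^sup>2" for x
    proof -
      have "2 * (\<bar>f x\<bar> * \<bar>g x\<bar>) \<le> (f x)\<^sup>2 + (g x)\<^sup>2"
        using sum_squares_bound[of "\<bar>f x\<bar>" "\<bar>g x\<bar>"] by (simp add: mult.assoc)
      then show ?thesis
        using mult_nonneg_nonneg[OF abs_ge_zero abs_ge_zero, of "f x" "g x"]
        unfolding real_norm_def abs_mult by linarith
    qed
  qed (use assms in auto)
  then show ?thesis
    by (simp add: absolutely_integrable_on_def)
qed

lemma square_integrable_add: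
  assumes "square_integrable S f" "square_integrable S g" "S \<in> sets lebesgue"
  shows "square_integrable S (\<lambda>x. f x + g x)"
proof -
  have "(\<lambda>x. (f x)\<^sup>2 + 2 * (f x * g x) + (g x)\<^sup>2) integrable_on S"
    using assms square_integrable_mult_integrable[OF assms] unfolding square_integrable_def
    by (intro integrable_add integrable_on_mult_right) auto
  then show ?thesis
    using assms unfolding square_integrable_def by (auto simp: power2_sum algebra_simps)
qed

lemma square_integrable_cmult:
  "square_integrable S f \<Longrightarrow> square_integrable S (\<lambda>x. c * f x)"
  using integrable_on_mult_right[of "\<lambda>x. (f x)\<^sup>2" S "c\<^sup>2"]
  unfolding square_integrable_def by (auto simp: power_mult_distrib)

lemma continuous_on_imp_square_integrable:
  "continuous_on {a..b} f \<Longrightarrow> square_integrable {a..b} f"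
  unfolding square_integrable_def
  by (auto intro!: continuous_imp_measurable_on_sets_lebesgue integrable_continuous_interval
      continuous_intros)

lemma square_integrable_mult_continuous:
  assumes f: "square_integrable {a..b} f" and g: "continuous_on {a..b} g"
  shows "square_integrable {a..b} (\<lambda>x. g x * f x)"
  unfolding square_integrable_def
proof
  obtain M where M: "\<And>x. x \<in> {a..b} \<Longrightarrow> \<bar>g x\<bar> \<le> M"
    using compact_imp_bounded[OF compact_continuous_image[OF g compact_Icc]]
    unfolding bounded_iff by force
  have gm: "g \<in> borel_measurable (lebesgue_on {a..b})"
    by (rule continuous_imp_measurable_on_sets_lebesgue[OF g]) simp
  then show "(\<lambda>x. g x * f x) \<in> borel_measurable (lebesgue_on {a..b})"
    using f unfolding square_integrable_def by (intro borel_measurable_times) auto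
  show "(\<lambda>x. (g x * f x)\<^sup>2) integrable_on {a..b}"
  proof (rule measurable_bounded_by_integrable_imp_integrable)
    show "(\<lambda>x. (g x * f x)\<^sup>2) \<in> borel_measurable (lebesgue_on {a..b})"
      using f gm unfolding square_integrable_def
      by (intro borel_measurable_power borel_measurable_times) auto
    show "(\<lambda>x. M\<^sup>2 * (f x)\<^sup>2) integrable_on {a..b}"
      using f unfolding square_integrable_def by (intro integrable_on_mult_right) auto
    show "norm ((g x * f x)\<^sup>2) \<le> M\<^sup>2 * (f x)\<^sup>2" if "x \<in> {a..b}" for x
      using power_mono[OF M[OF that] abs_ge_zero, of 2]
      by (simp add: power_mult_distrib mult_right_mono)
  qed auto
qed

lemma discriminant_le_of_nonneg_quadratic:
  fixes a b c :: real
  assumes "0 \<le> a" and nonneg: "\<And>t. 0 \<le> a * t\<^sup>2 - 2 * b * t + c"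
  shows "b\<^sup>2 \<le> a * c"
proof (cases "a = 0")
  case True
  show ?thesis
  proof (cases "b = 0")
    case False
    have "0 \<le> a * ((c + 1) / (2 * b))\<^sup>2 - 2 * b * ((c + 1) / (2 * b)) + c"
      by (rule nonneg)
    then show ?thesis using True False by (simp add: field_simps)
  qed (use True in simp)
next
  case False
  then have "a > 0" using assms(1) by simp
  moreover have "0 \<le> a * (b / a)\<^sup>2 - 2 * b * (b / a) + c" by (rule nonneg)
  ultimately show ?thesis by (simp add: power2_eq_square field_simps)
qed

lemma integral_mult_sq_le:
  fixes f g :: "real \<Rightarrow> real"
  assumes "(\<lambda>x. (f x)\<^sup>2) integrable_on S" "(\<lambda>x. (g x)\<^sup>2) integrable_on S"
    and "(\<lambda>x. f x * g x) integrable_on S"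
  shows "(integral S (\<lambda>x. f x * g x))\<^sup>2 \<le> integral S (\<lambda>x. (f x)\<^sup>2) * integral S (\<lambda>x. (g x)\<^sup>2)"
proof (rule discriminant_le_of_nonneg_quadratic)
  show "0 \<le> integral S (\<lambda>x. (f x)\<^sup>2)"
    using assms(1) by (rule integral_nonneg) simp
  fix t :: real
  have "0 \<le> integral S (\<lambda>x. t\<^sup>2 * (f x)\<^sup>2 - 2 * t * (f x * g x) + (g x)\<^sup>2)"
  proof (rule integral_nonneg)
    show "(\<lambda>x. t\<^sup>2 * (f x)\<^sup>2 - 2 * t * (f x * g x) + (g x)\<^sup>2) integrable_on S"
      using assms by (intro integrable_add integrable_diff integrable_on_mult_right)
    show "0 \<le> t\<^sup>2 * (f x)\<^sup>2 - 2 * t * (f x * g x) + (g x)\<^sup>2" for x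
      using zero_le_power2[of "t * f x - g x"] by (simp add: power2_eq_square algebra_simps)
  qed
  also have "\<dots> = integral S (\<lambda>x. (f x)\<^sup>2) * t\<^sup>2 - 2 * integral S (\<lambda>x. f x * g x) * t
      + integral S (\<lambda>x. (g x)\<^sup>2)"
    using assms by (simp add: integral_add integral_diff integrable_on_mult_right integrable_diff)
  finally show "0 \<le> \<dots>" .
qed

lemma abs_integral_mult_le:
  fixes f g :: "real \<Rightarrow> real"
  assumes "(\<lambda>x. (f x)\<^sup>2) integrable_on S" "(\<lambda>x. (g x)\<^sup>2) integrable_on S"
    and "(\<lambda>x. f x * g x) integrable_on S"
  shows "\<bar>integral S (\<lambda>x. f x * g x)\<bar> \<le> sqrt (integral S (\<lambda>x. (f x)\<^sup>2)) * sqrt (integral S (\<lambda>x. (g x)\<^sup>2))"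
  using real_sqrt_le_mono[OF integral_mult_sq_le[OF assms]] by (simp add: real_sqrt_mult)

text \<open>Lebesgue differentiation: at almost every x the averages of f over [x, x + h] tend to f x,
  and here they all vanish.\<close>

lemma negligible_nonzero_of_indefinite_integral_zero:
  fixes f :: "real \<Rightarrow> real"
  assumes f: "f integrable_on {a..b}" and zero: "\<And>y. y \<in> {a..b} \<Longrightarrow> integral {a..y} f = 0"
  shows "negligible {x\<in>{a..b}. f x \<noteq> 0}"
proof -
  define F where "F = (\<lambda>x. if x \<in> {a..b} then f x else 0)"
  have "F integrable_on UNIV"
    using f unfolding F_def integrable_restrict_UNIV .
  then have "\<And>c d. F integrable_on cbox c d"
    by (rule integrable_on_subcbox) simp
  then obtain Z where Z: "negligible Z"
    and Lebesgue_point: "\<And>x e. \<lbrakk>x \<notin> Z; 0 < e\<rbrakk> \<Longrightarrow> \<exists>d>0. \<forall>h. 0 < h \<and> h < d \<longrightarrow>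
         norm (integral (cbox x (x + h *\<^sub>R One)) F /\<^sub>R h ^ DIM(real) - F x) < e"
    using integrable_ccontinuous_explicit by (metis (no_types))
  have "{x\<in>{a..b}. f x \<noteq> 0} \<subseteq> Z \<union> {a, b}"
  proof (rule subsetI, rule ccontr)
    fix x assume x: "x \<in> {x\<in>{a..b}. f x \<noteq> 0}" and nx: "x \<notin> Z \<union> {a, b}"
    then have x_in: "a < x" "x < b" and Fx: "F x = f x" "0 < \<bar>f x\<bar>"
      by (auto simp: F_def)
    obtain d where d: "d > 0" and close: "\<And>h. 0 < h \<and> h < d \<Longrightarrow>
        norm (integral (cbox x (x + h *\<^sub>R One)) F /\<^sub>R h ^ DIM(real) - F x) < \<bar>f x\<bar>"
      using Lebesgue_point[of x "\<bar>f x\<bar>"] nx Fx by auto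
    define h where "h = min d (b - x) / 2"
    have h: "0 < h" "h < d" "x + h \<le> b"
      using d x_in by (auto simp: h_def min_def field_simps)
    have "integral {x..x+h} F = integral {x..x+h} f"
      using h x_in by (intro integral_cong) (auto simp: F_def)
    also have "\<dots> = integral {a..x+h} f - integral {a..x} f"
      using Henstock_Kurzweil_Integration.integral_combine[where a=a and c=x and b="x + h" and f=f]
        h x_in integrable_on_subinterval[OF f, of a "x + h"]
      by simp
    also have "\<dots> = 0"
      using zero[of "x + h"] zero[of x] h x_in by auto
    finally have "integral (cbox x (x + h *\<^sub>R One)) F = 0"
      by (simp add: cbox_interval)
    then show False
      using close[of h] h Fx by simp
  qed
  moreover have "negligible (Z \<union> {a, b})"
    using Z by (intro negligible_Un) auto
  ultimately show ?thesis
    by (rule negligible_subset[rotated])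
qed

lemma is_d2_d2: "H2 b q \<Longrightarrow> is_d2 b q (d2 b q)"
  unfolding H2_def d2_def using someI[of "is_d2 b q"] by blast

lemma is_d2_integrable: "is_d2 b q g \<Longrightarrow> 0 \<le> b \<Longrightarrow> g integrable_on {0..b}"
  unfolding is_d2_def by auto

lemma is_d2_square_integrable: "is_d2 b q g \<Longrightarrow> 0 \<le> b \<Longrightarrow> square_integrable {0..b} g"
  unfolding square_integrable_def
  using is_d2_integrable[of b q g] integrable_imp_measurable unfolding is_d2_def by blast

lemma d1_eq_integral:
  assumes "is_d2 b q g" "x \<in> {0..b}"
  shows "d1 b q x = d1 b q 0 + integral {0..x} g"
proof -
  have "integral {0..x} g = d1 b q x - d1 b q 0"
    using assms unfolding is_d2_def by (blast intro: integral_unique)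
  then show ?thesis by simp
qed

lemma continuous_on_d1:
  assumes "is_d2 b q g" "0 \<le> b"
  shows "continuous_on {0..b} (d1 b q)"
proof -
  have "continuous_on {0..b} (\<lambda>x. d1 b q 0 + integral {0..x} g)"
    by (intro continuous_intros indefinite_integral_continuous_1 is_d2_integrable[OF assms])
  then show ?thesis
  proof (rule continuous_on_eq)
    show "d1 b q 0 + integral {0..x} g = d1 b q x" if "x \<in> {0..b}" for x
      using d1_eq_integral[OF assms(1) that] by linarith
  qed
qed

lemma continuous_on_H2: "H2 b q \<Longrightarrow> continuous_on {0..b} q"
  unfolding H2_def by (intro continuous_on_vector_derivative) auto

lemma is_d2_unique:
  assumes g1: "is_d2 b q g1" and g2: "is_d2 b q g2" and b: "0 \<le> b"
  shows "negligible {x\<in>{0..b}. g1 x \<noteq> g2 x}"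
proof -
  have int: "g1 integrable_on {0..b}" "g2 integrable_on {0..b}"
    using is_d2_integrable g1 g2 b by auto
  have "negligible {x\<in>{0..b}. g1 x - g2 x \<noteq> 0}"
  proof (rule negligible_nonzero_of_indefinite_integral_zero)
    show "(\<lambda>x. g1 x - g2 x) integrable_on {0..b}"
      using int by (rule integrable_diff)
    fix y assume y: "y \<in> {0..b}"
    then have "integral {0..y} (\<lambda>x. g1 x - g2 x) = integral {0..y} g1 - integral {0..y} g2"
      by (intro integral_diff integrable_on_subinterval[OF int(1)]
          integrable_on_subinterval[OF int(2)]) auto
    then show "integral {0..y} (\<lambda>x. g1 x - g2 x) = 0"
      using d1_eq_integral[OF g1 y] d1_eq_integral[OF g2 y] by simp
  qed
  then show ?thesis by simp
qed

lemma d1_lincomb: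
  assumes "H2 b q1" "H2 b q2" "0 < b" "x \<in> {0..b}"
  shows "((\<lambda>x. a * q1 x + c * q2 x) has_vector_derivative (a * d1 b q1 x + c * d1 b q2 x))
           (at x within {0..b})"
    and "d1 b (\<lambda>x. a * q1 x + c * q2 x) x = a * d1 b q1 x + c * d1 b q2 x"
proof -
  have "(q1 has_vector_derivative d1 b q1 x) (at x within {0..b})"
       "(q2 has_vector_derivative d1 b q2 x) (at x within {0..b})"
    using assms unfolding H2_def by auto
  then show *: "((\<lambda>x. a * q1 x + c * q2 x) has_vector_derivative (a * d1 b q1 x + c * d1 b q2 x))
      (at x within {0..b})"
    by (auto intro!: derivative_eq_intros)
  show "d1 b (\<lambda>x. a * q1 x + c * q2 x) x = a * d1 b q1 x + c * d1 b q2 x"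
    unfolding d1_def[of b "\<lambda>x. a * q1 x + c * q2 x"]
    by (rule vector_derivative_within_closed_interval[OF assms(3,4) *])
qed

lemma is_d2_lincomb:
  assumes H: "H2 b q1" "H2 b q2" and b: "0 < b"
  shows "is_d2 b (\<lambda>x. a * q1 x + c * q2 x) (\<lambda>x. a * d2 b q1 x + c * d2 b q2 x)"
  unfolding is_d2_def
proof (intro conjI ballI)
  fix x assume x: "x \<in> {0..b}"
  have "(d2 b q1 has_integral (d1 b q1 x - d1 b q1 0)) {0..x}"
       "(d2 b q2 has_integral (d1 b q2 x - d1 b q2 0)) {0..x}"
    using is_d2_d2[OF H(1)] is_d2_d2[OF H(2)] x unfolding is_d2_def by auto
  then have "((\<lambda>x. a * d2 b q1 x + c * d2 b q2 x) has_integral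
      (a * (d1 b q1 x - d1 b q1 0) + c * (d1 b q2 x - d1 b q2 0))) {0..x}"
    by (intro has_integral_add has_integral_mult_right)
  then show "((\<lambda>x. a * d2 b q1 x + c * d2 b q2 x) has_integral
      (d1 b (\<lambda>x. a * q1 x + c * q2 x) x - d1 b (\<lambda>x. a * q1 x + c * q2 x) 0)) {0..x}"
    using d1_lincomb(2)[OF H b x] d1_lincomb(2)[OF H b, of 0] b by (simp add: algebra_simps)
next
  have "square_integrable {0..b} (\<lambda>x. a * d2 b q1 x + c * d2 b q2 x)"
    using is_d2_square_integrable[OF is_d2_d2] H b
    by (intro square_integrable_add square_integrable_cmult) auto
  then show "(\<lambda>x. (a * d2 b q1 x + c * d2 b q2 x)\<^sup>2) integrable_on {0..b}"
    by (rule square_integrable_integrable_sq)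
qed

lemma H2_lincomb:
  assumes H: "H2 b q1" "H2 b q2" and b: "0 < b"
  shows "H2 b (\<lambda>x. a * q1 x + c * q2 x)"
  unfolding H2_def
proof (intro conjI allI impI ballI)
  show "a * q1 x + c * q2 x = 0" if "x \<notin> {0..b}" for x
    using H that unfolding H2_def by auto
  show "((\<lambda>x. a * q1 x + c * q2 x) has_vector_derivative d1 b (\<lambda>x. a * q1 x + c * q2 x) x)
      (at x within {0..b})" if "x \<in> {0..b}" for x
    using d1_lincomb[OF H b that] by simp
  show "\<exists>g. is_d2 b (\<lambda>x. a * q1 x + c * q2 x) g"
    using is_d2_lincomb[OF H b] by blast
qed

text \<open>Since d2 is chosen by SOME, it is linear only almost everywhere; this suffices under integrals.\<close>

lemma negligible_d2_lincomb:
  assumes "H2 b q1" "H2 b q2" "0 < b"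
  shows "negligible {x\<in>{0..b}. d2 b (\<lambda>x. a * q1 x + c * q2 x) x \<noteq> a * d2 b q1 x + c * d2 b q2 x}"
  using is_d2_unique[OF is_d2_d2[OF H2_lincomb[OF assms]] is_d2_lincomb[OF assms]] assms(3) by simp

section \<open>The Carleman estimate\<close>

definition weight :: "real \<Rightarrow> real \<Rightarrow> real" where
  "weight lam x = (exp (- lam * x))\<^sup>2"

lemma weight_pos: "0 < weight lam x"
  unfolding weight_def by simp

lemma weight_le_1: "0 \<le> lam \<Longrightarrow> 0 \<le> x \<Longrightarrow> weight lam x \<le> 1"
  unfolding weight_def by (simp add: power_le_one)

lemma weight_eq_exp: "weight lam x = exp (- 2 * lam * x)"
  unfolding weight_def using exp_double[of "- lam * x"] by (simp add: mult.assoc)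

lemma weight_ge: "0 \<le> lam \<Longrightarrow> x \<le> b \<Longrightarrow> exp (- 2 * lam * b) \<le> weight lam x"
  unfolding weight_eq_exp by (simp add: mult_left_mono)

lemma continuous_on_weight: "continuous_on S (weight lam)"
  unfolding weight_def by (intro continuous_intros)

lemma integrable_sq_mult_continuous:
  assumes "square_integrable {a..b} f" "continuous_on {a..b} w"
  shows "(\<lambda>t. (f t)\<^sup>2 * w t) integrable_on {a..b}"
  using square_integrable_mult_integrable[OF assms(1) square_integrable_mult_continuous[OF assms]]
  by (simp add: power2_eq_square mult_ac)

lemma integral_sq_mult_mono_interval:
  assumes "square_integrable {0..b} f" "x \<in> {0..b}" "continuous_on {0..b} w" "\<And>t. 0 \<le> w t"
  shows "integral {0..x} (\<lambda>t. (f t)\<^sup>2 * w t) \<le> integral {0..b} (\<lambda>t. (f t)\<^sup>2 * w t)"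
  using assms integrable_sq_mult_continuous[OF assms(1,3)]
  by (intro integral_subset_le integrable_on_subinterval) auto

lemma integral_exp_sq:
  fixes lam x :: real
  assumes "lam > 0" "0 \<le> x"
  shows "integral {0..x} (\<lambda>t. (exp (lam * t))\<^sup>2) = (exp (2 * lam * x) - 1) / (2 * lam)"
proof -
  have "((\<lambda>t. (exp (lam * t))\<^sup>2) has_integral
      (exp (2 * lam * x) / (2 * lam) - exp (2 * lam * 0) / (2 * lam))) {0..x}"
  proof (rule fundamental_theorem_of_calculus)
    fix t :: real
    have "((\<lambda>t. exp (2 * lam * t) / (2 * lam)) has_real_derivative
        (exp (2 * lam * t) * (2 * lam) / (2 * lam))) (at t within {0..x})"
      by (auto intro!: derivative_eq_intros)
    moreover have "exp (2 * lam * t) * (2 * lam) / (2 * lam) = (exp (lam * t))\<^sup>2"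
      using assms(1) exp_double[of "lam * t"] by (simp add: mult.assoc)
    ultimately show "((\<lambda>t. exp (2 * lam * t) / (2 * lam)) has_vector_derivative (exp (lam * t))\<^sup>2)
        (at t within {0..x})"
      by (simp add: has_real_derivative_iff_has_vector_derivative)
  qed (use assms in auto)
  then show ?thesis
    by (simp add: integral_unique diff_divide_distrib)
qed

lemma d1_increment_sq_le:
  assumes d: "is_d2 b q g" and x: "x \<in> {0..b}"
  shows "(d1 b q x - d1 b q 0)\<^sup>2
    \<le> integral {0..x} (\<lambda>t. (g t)\<^sup>2 * weight lam t) * integral {0..x} (\<lambda>t. (exp (lam * t))\<^sup>2)"
proof -
  have b: "0 \<le> b" and sub: "{0..x} \<subseteq> {0..b}" using x by auto
  have g: "square_integrable {0..b} g" "g integrable_on {0..x}"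
    using is_d2_square_integrable[OF d b] integrable_on_subinterval[OF is_d2_integrable[OF d b] sub]
    by auto
  have split: "exp (- lam * t) * g t * exp (lam * t) = g t" for t
    by (simp add: exp_minus field_simps)
  have "d1 b q x - d1 b q 0 = integral {0..x} (\<lambda>t. (exp (- lam * t) * g t) * exp (lam * t))"
    unfolding split using d1_eq_integral[OF d x] by simp
  moreover have "(integral {0..x} (\<lambda>t. (exp (- lam * t) * g t) * exp (lam * t)))\<^sup>2
      \<le> integral {0..x} (\<lambda>t. (exp (- lam * t) * g t)\<^sup>2) * integral {0..x} (\<lambda>t. (exp (lam * t))\<^sup>2)"
  proof (rule integral_mult_sq_le)
    have "square_integrable {0..b} (\<lambda>t. exp (- lam * t) * g t)"
      by (rule square_integrable_mult_continuous[OF g(1)]) (intro continuous_intros)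
    then show "(\<lambda>t. (exp (- lam * t) * g t)\<^sup>2) integrable_on {0..x}"
      using integrable_on_subinterval[OF square_integrable_integrable_sq sub] by blast
    show "(\<lambda>t. (exp (lam * t))\<^sup>2) integrable_on {0..x}"
      by (intro integrable_continuous_interval continuous_intros)
    show "(\<lambda>t. exp (- lam * t) * g t * exp (lam * t)) integrable_on {0..x}"
      unfolding split by (rule g(2))
  qed
  moreover have "integral {0..x} (\<lambda>t. (exp (- lam * t) * g t)\<^sup>2)
      = integral {0..x} (\<lambda>t. (g t)\<^sup>2 * weight lam t)"
    by (simp add: weight_def power_mult_distrib mult.commute)
  ultimately show ?thesis by simp
qed

text \<open>Cauchy--Schwarz against e^{\<lambda>t} costs the factor e^{2\<lambda>x}/(2\<lambda>), which the weight at x cancels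
  exactly; only 1/(2\<lambda>) survives.\<close>

lemma carleman_d1_estimate:
  assumes d: "is_d2 b q g" and x: "x \<in> {0..b}" and lam: "lam > 0"
  shows "(d1 b q x - d1 b q 0)\<^sup>2 * weight lam x
    \<le> integral {0..b} (\<lambda>t. (g t)\<^sup>2 * weight lam t) / (2 * lam)"
proof -
  have b: "0 \<le> b" using x by auto
  let ?I = "integral {0..b} (\<lambda>t. (g t)\<^sup>2 * weight lam t)"
  let ?Ix = "integral {0..x} (\<lambda>t. (g t)\<^sup>2 * weight lam t)"
  let ?E = "integral {0..x} (\<lambda>t. (exp (lam * t))\<^sup>2)"
  have I: "?Ix \<le> ?I"
    by (rule integral_sq_mult_mono_interval[OF is_d2_square_integrable[OF d b] x continuous_on_weight])
      (simp add: less_imp_le[OF weight_pos])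
  have "(\<lambda>t. (g t)\<^sup>2 * weight lam t) integrable_on {0..x}"
    using integrable_on_subinterval[OF integrable_sq_mult_continuous[OF
        is_d2_square_integrable[OF d b] continuous_on_weight[of _ lam]], of 0 x] x
    by simp
  then have Ix: "0 \<le> ?Ix"
    by (rule integral_nonneg) (simp add: less_imp_le[OF weight_pos])
  have E: "?E \<le> exp (2 * lam * x) / (2 * lam)" "0 \<le> ?E"
    using integral_exp_sq[OF lam, of x] x lam by (auto simp: divide_right_mono)
  have "?Ix * ?E \<le> ?I * (exp (2 * lam * x) / (2 * lam))"
    using Ix I E by (intro mult_mono) auto
  then have "(d1 b q x - d1 b q 0)\<^sup>2 \<le> ?I * (exp (2 * lam * x) / (2 * lam))"
    using d1_increment_sq_le[OF d x, of lam] by linarith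
  then have "(d1 b q x - d1 b q 0)\<^sup>2 * weight lam x
      \<le> ?I * (exp (2 * lam * x) / (2 * lam)) * weight lam x"
    by (rule mult_right_mono[OF _ less_imp_le[OF weight_pos]])
  also have "\<dots> = ?I * (exp (2 * lam * x) * weight lam x) / (2 * lam)"
    by simp
  also have "exp (2 * lam * x) * weight lam x = 1"
    unfolding weight_eq_exp by (simp add: exp_minus field_simps)
  finally show ?thesis by simp
qed

lemma d1_increment_sq_le_d2:
  assumes d: "is_d2 b q g" and x: "x \<in> {0..b}"
  shows "(d1 b q x - d1 b q 0)\<^sup>2 \<le> b * integral {0..b} (\<lambda>t. (g t)\<^sup>2)"
proof -
  have b: "0 \<le> b" using x by auto
  have "(d1 b q x - d1 b q 0)\<^sup>2 \<le> integral {0..x} (\<lambda>t. (g t)\<^sup>2) * x"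
    using d1_increment_sq_le[OF d x, of 0] x by (simp add: weight_def)
  also have "\<dots> \<le> integral {0..b} (\<lambda>t. (g t)\<^sup>2) * b"
  proof (rule mult_mono)
    show "integral {0..x} (\<lambda>t. (g t)\<^sup>2) \<le> integral {0..b} (\<lambda>t. (g t)\<^sup>2)"
      using integral_sq_mult_mono_interval[OF is_d2_square_integrable[OF d b] x, of "\<lambda>t. 1"] by simp
    show "0 \<le> integral {0..b} (\<lambda>t. (g t)\<^sup>2)"
      using is_d2_square_integrable[OF d b] by (intro integral_nonneg square_integrable_integrable_sq) auto
  qed (use x in auto)
  finally show ?thesis by (simp add: mult.commute)
qed

lemma H2vec_H2: "H2vec b N Q \<Longrightarrow> m < N \<Longrightarrow> H2 b (Q m)"
  unfolding H2vec_def by blast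

lemma square_integrable_d2: "H2 b q \<Longrightarrow> 0 \<le> b \<Longrightarrow> square_integrable {0..b} (d2 b q)"
  using is_d2_square_integrable[OF is_d2_d2] .

lemma continuous_on_d1_H2: "H2 b q \<Longrightarrow> 0 \<le> b \<Longrightarrow> continuous_on {0..b} (d1 b q)"
  using continuous_on_d1[OF is_d2_d2] .

definition H2_sq :: "real \<Rightarrow> (real \<Rightarrow> real) \<Rightarrow> real" where
  "H2_sq b q = integral {0..b} (\<lambda>x. (q x)\<^sup>2 + (d1 b q x)\<^sup>2 + (d2 b q x)\<^sup>2)"

definition d2_sq :: "real \<Rightarrow> (real \<Rightarrow> real) \<Rightarrow> real" where
  "d2_sq b q = integral {0..b} (\<lambda>x. (d2 b q x)\<^sup>2)"

lemma d2_sq_nonneg: "H2 b q \<Longrightarrow> 0 \<le> b \<Longrightarrow> 0 \<le> d2_sq b q"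
  unfolding d2_sq_def
  by (intro integral_nonneg square_integrable_integrable_sq square_integrable_d2) auto

lemma H2_sq_eq:
  assumes "H2 b q" "0 \<le> b"
  shows "H2_sq b q = integral {0..b} (\<lambda>x. (q x)\<^sup>2) + integral {0..b} (\<lambda>x. (d1 b q x)\<^sup>2) + d2_sq b q"
    and "(\<lambda>x. (q x)\<^sup>2) integrable_on {0..b}" "(\<lambda>x. (d1 b q x)\<^sup>2) integrable_on {0..b}"
proof -
  show i0: "(\<lambda>x. (q x)\<^sup>2) integrable_on {0..b}" and i1: "(\<lambda>x. (d1 b q x)\<^sup>2) integrable_on {0..b}"
    using continuous_on_H2[OF assms(1)] continuous_on_d1_H2[OF assms]
    by (auto intro!: integrable_continuous_interval continuous_intros)
  have i2: "(\<lambda>x. (d2 b q x)\<^sup>2) integrable_on {0..b}"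
    by (intro square_integrable_integrable_sq square_integrable_d2 assms)
  show "H2_sq b q = integral {0..b} (\<lambda>x. (q x)\<^sup>2) + integral {0..b} (\<lambda>x. (d1 b q x)\<^sup>2) + d2_sq b q"
    unfolding H2_sq_def d2_sq_def using i0 i1 i2 by (simp add: integral_add integrable_add)
qed

lemma d2_sq_le_H2_sq: "H2 b q \<Longrightarrow> 0 \<le> b \<Longrightarrow> d2_sq b q \<le> H2_sq b q"
  using H2_sq_eq[of b q] by (simp add: integral_nonneg)

lemma H2_sq_nonneg: "H2 b q \<Longrightarrow> 0 \<le> b \<Longrightarrow> 0 \<le> H2_sq b q"
  using d2_sq_nonneg d2_sq_le_H2_sq by (rule order_trans)

lemma sum_H2_sq_nonneg: "H2vec b N h \<Longrightarrow> 0 \<le> b \<Longrightarrow> 0 \<le> (\<Sum>n<N. H2_sq b (h n))"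
  by (intro sum_nonneg H2_sq_nonneg H2vec_H2) auto

lemma H2norm_sq_eq: "H2vec b N h \<Longrightarrow> 0 \<le> b \<Longrightarrow> (H2norm b N h)\<^sup>2 = (\<Sum>n<N. H2_sq b (h n))"
  using sum_H2_sq_nonneg unfolding H2norm_def H2_sq_def by simp

lemma H2norm_nonneg: "H2vec b N h \<Longrightarrow> 0 \<le> b \<Longrightarrow> 0 \<le> H2norm b N h"
  using sum_H2_sq_nonneg unfolding H2norm_def H2_sq_def by simp

lemma sum_d2_sq_le_H2norm_sq:
  "H2vec b N h \<Longrightarrow> 0 \<le> b \<Longrightarrow> (\<Sum>n<N. d2_sq b (h n)) \<le> (H2norm b N h)\<^sup>2"
  unfolding H2norm_sq_eq using H2vec_H2 d2_sq_le_H2_sq by (intro sum_mono) blast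

lemma d2_sq_le_H2norm_sq:
  assumes "H2vec b N h" "0 \<le> b" "n < N"
  shows "d2_sq b (h n) \<le> (H2norm b N h)\<^sup>2"
proof -
  have "d2_sq b (h n) \<le> (\<Sum>n<N. d2_sq b (h n))"
    using assms H2vec_H2 d2_sq_nonneg by (intro member_le_sum) auto
  then show ?thesis
    using sum_d2_sq_le_H2norm_sq[OF assms(1,2)] by linarith
qed

lemma abs_d1_le_sqrt_d2_sq:
  assumes "H2 b q" "d1 b q 0 = 0" "x \<in> {0..b}"
  shows "\<bar>d1 b q x\<bar> \<le> sqrt (b * d2_sq b q)"
  using real_sqrt_le_mono[OF d1_increment_sq_le_d2[OF is_d2_d2[OF assms(1)] assms(3)]] assms(2)
  unfolding d2_sq_def by simp

lemma abs_H2_le_of_d1_bound: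
  assumes h: "H2 b q" and q0: "q 0 = 0" and M: "\<And>t. t \<in> {0..b} \<Longrightarrow> \<bar>d1 b q t\<bar> \<le> M"
    and x: "x \<in> {0..b}"
  shows "\<bar>q x\<bar> \<le> M * x"
proof -
  have "(d1 b q has_integral (q x - q 0)) {0..x}"
  proof (rule fundamental_theorem_of_calculus)
    fix t assume t: "t \<in> {0..x}"
    then have "(q has_vector_derivative d1 b q t) (at t within {0..b})"
      using h x unfolding H2_def by simp
    then show "(q has_vector_derivative d1 b q t) (at t within {0..x})"
      by (rule has_vector_derivative_within_subset) (use x in simp)
  qed (use x in simp)
  then have qx: "(d1 b q has_integral q x) {0..x}"
    using q0 by simp
  have "norm (integral {0..x} (d1 b q)) \<le> integral {0..x} (\<lambda>t. M)"
  proof (rule integral_norm_bound_integral)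
    show "d1 b q integrable_on {0..x}"
      using qx by blast
    show "norm (d1 b q t) \<le> M" if "t \<in> {0..x}" for t
      using M[of t] that x by simp
  qed (rule integrable_const_ivl)
  then show ?thesis
    using integral_unique[OF qx] x by (simp add: mult.commute)
qed

lemma H2_sq_le_d2_sq:
  assumes h: "H2 b q" and b: "0 < b" and q0: "q 0 = 0" and d0: "d1 b q 0 = 0"
  shows "H2_sq b q \<le> (1 + b\<^sup>2 + b ^ 4) * d2_sq b q"
proof -
  define M where "M = sqrt (b * d2_sq b q)"
  have M0: "0 \<le> M" unfolding M_def using b d2_sq_nonneg[OF h] by simp
  have d1M: "\<bar>d1 b q x\<bar> \<le> M" if "x \<in> {0..b}" for x
    unfolding M_def by (rule abs_d1_le_sqrt_d2_sq[OF h d0 that])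
  have qM: "\<bar>q x\<bar> \<le> M * b" if x: "x \<in> {0..b}" for x
    using order_trans[OF abs_H2_le_of_d1_bound[OF h q0 d1M x] mult_left_mono[of x b M]] x M0 by simp
  have "integral {0..b} (\<lambda>x. (q x)\<^sup>2) \<le> integral {0..b} (\<lambda>x. (M * b)\<^sup>2)"
    using qM M0 b
    by (intro integral_le H2_sq_eq(2)[OF h] integrable_const_ivl) (auto simp: power2_le_iff_abs_le)
  moreover have "integral {0..b} (\<lambda>x. (d1 b q x)\<^sup>2) \<le> integral {0..b} (\<lambda>x. M\<^sup>2)"
    using d1M M0 b
    by (intro integral_le H2_sq_eq(3)[OF h] integrable_const_ivl) (auto simp: power2_le_iff_abs_le)
  moreover have "M\<^sup>2 = b * d2_sq b q"
    unfolding M_def using b d2_sq_nonneg[OF h] by simp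
  ultimately have "H2_sq b q \<le> b * (b\<^sup>2 * (b * d2_sq b q)) + b * (b * d2_sq b q) + d2_sq b q"
    using H2_sq_eq(1)[OF h] b by (simp add: power_mult_distrib algebra_simps)
  also have "\<dots> = (1 + b\<^sup>2 + b ^ 4) * d2_sq b q"
    by (simp add: power2_eq_square power4_eq_xxxx algebra_simps)
  finally show ?thesis .
qed

lemma H2norm_sq_le_sum_d2_sq:
  assumes h: "H2vec b N h" and b: "0 < b" and zero: "\<And>n. n < N \<Longrightarrow> h n 0 = 0 \<and> d1 b (h n) 0 = 0"
  shows "(H2norm b N h)\<^sup>2 \<le> (1 + b\<^sup>2 + b ^ 4) * (\<Sum>n<N. d2_sq b (h n))"
  unfolding H2norm_sq_eq[OF h less_imp_le[OF b]] sum_distrib_left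
  using H2vec_H2[OF h] zero b by (intro sum_mono H2_sq_le_d2_sq) auto

lemma abs_d1_le_H2norm:
  assumes h: "H2vec b N h" and b: "0 < b" and n: "n < N" and d0: "d1 b (h n) 0 = 0"
    and x: "x \<in> {0..b}"
  shows "\<bar>d1 b (h n) x\<bar> \<le> sqrt b * H2norm b N h"
proof -
  have "\<bar>d1 b (h n) x\<bar> \<le> sqrt (b * d2_sq b (h n))"
    by (rule abs_d1_le_sqrt_d2_sq[OF H2vec_H2[OF h n] d0 x])
  also have "\<dots> \<le> sqrt (b * (H2norm b N h)\<^sup>2)"
    using d2_sq_le_H2norm_sq[OF h _ n] b by (intro real_sqrt_le_mono mult_left_mono) auto
  also have "\<dots> = sqrt b * H2norm b N h"
    using H2norm_nonneg[OF h] b by (simp add: real_sqrt_mult)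
  finally show ?thesis .
qed

lemma H2_sq_cmult:
  assumes h: "H2 b q" and b: "0 < b"
  shows "H2_sq b (\<lambda>x. t * q x) = t\<^sup>2 * H2_sq b q"
proof -
  have "negligible {x\<in>{0..b}. d2 b (\<lambda>x. t * q x) x \<noteq> t * d2 b q x}"
    using negligible_d2_lincomb[OF h h b, of t 0] by simp
  then have "H2_sq b (\<lambda>x. t * q x)
      = integral {0..b} (\<lambda>x. (t * q x)\<^sup>2 + (d1 b (\<lambda>x. t * q x) x)\<^sup>2 + (t * d2 b q x)\<^sup>2)"
    unfolding H2_sq_def by (rule integral_spike) auto
  also have "\<dots> = integral {0..b} (\<lambda>x. t\<^sup>2 * ((q x)\<^sup>2 + (d1 b q x)\<^sup>2 + (d2 b q x)\<^sup>2))"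
    using d1_lincomb(2)[OF h h b, of _ t 0]
    by (intro integral_cong) (simp add: power_mult_distrib algebra_simps)
  finally show ?thesis
    unfolding H2_sq_def by simp
qed

lemma H2norm_cmult:
  assumes h: "H2vec b N h" and b: "0 < b"
  shows "H2norm b N (\<lambda>n x. t * h n x) = \<bar>t\<bar> * H2norm b N h"
proof -
  have "H2norm b N (\<lambda>n x. t * h n x) = sqrt (t\<^sup>2 * (\<Sum>n<N. H2_sq b (h n)))"
    unfolding H2norm_def H2_sq_def[symmetric] sum_distrib_left
    using H2_sq_cmult[OF H2vec_H2[OF h] b] by simp
  then show ?thesis
    unfolding H2norm_def H2_sq_def[symmetric] by (simp add: real_sqrt_mult)
qed

lemma H2vec_lincomb:
  assumes "H2vec b N P" "H2vec b N Q" "0 < b"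
  shows "H2vec b N (\<lambda>n x. a * P n x + c * Q n x)"
  using assms H2_lincomb unfolding H2vec_def by auto

lemma H0vec_H2vec: "H0vec b N h \<Longrightarrow> H2vec b N h"
  unfolding H0vec_def by blast

lemma H0vec_lincomb:
  assumes h: "H0vec b N h1" "H0vec b N h2" and b: "0 < b"
  shows "H0vec b N (\<lambda>n x. a * h1 n x + c * h2 n x)"
  unfolding H0vec_def
proof (intro conjI allI impI)
  show "H2vec b N (\<lambda>n x. a * h1 n x + c * h2 n x)"
    using H2vec_lincomb H0vec_H2vec h b by blast
  fix n assume n: "n < N"
  have H: "H2 b (h1 n)" "H2 b (h2 n)"
    using H2vec_H2[OF H0vec_H2vec n] h by auto
  show "a * h1 n 0 + c * h2 n 0 = 0"
    using h n unfolding H0vec_def by simp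
  show "d1 b (\<lambda>x. a * h1 n x + c * h2 n x) 0 = 0" "d1 b (\<lambda>x. a * h1 n x + c * h2 n x) b = 0"
    using d1_lincomb(2)[OF H b, of 0] d1_lincomb(2)[OF H b, of b] h n b unfolding H0vec_def by auto
qed

lemma negligible_d2_lincomb_vec:
  assumes "H2vec b N P" "H2vec b N Q" "0 < b"
  shows "negligible (\<Union>k<N. {x\<in>{0..b}. d2 b (\<lambda>x. a * P k x + c * Q k x) x
                                         \<noteq> a * d2 b (P k) x + c * d2 b (Q k) x})"
  using assms H2vec_H2 negligible_d2_lincomb by (intro negligible_Union) auto

section \<open>The quadratic nonlinearity\<close>

definition dFnl :: "real \<Rightarrow> nat \<Rightarrow> (nat \<Rightarrow> real) \<Rightarrow> (nat \<Rightarrow> real) \<Rightarrow> nat \<Rightarrow> real" where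
  "dFnl sl N p v k = (\<Sum>m<N. \<Sum>n<N. Fcoef sl k m n * (p m * v n + v m * p n))"

definition Fnorm :: "real \<Rightarrow> nat \<Rightarrow> real" where
  "Fnorm sl N = (\<Sum>k<N. \<Sum>m<N. \<Sum>n<N. \<bar>Fcoef sl k m n\<bar>)"

lemma Fnl_add: "Fnl sl N (\<lambda>m. p m + v m) k = Fnl sl N p k + dFnl sl N p v k + Fnl sl N v k"
  unfolding Fnl_def dFnl_def by (simp add: sum.distrib[symmetric] algebra_simps)

lemma dFnl_lincomb:
  "dFnl sl N p (\<lambda>m. a * v m + c * u m) k = a * dFnl sl N p v k + c * dFnl sl N p u k"
  unfolding dFnl_def by (simp add: sum_distrib_left sum.distrib[symmetric] algebra_simps)

lemma Fnl_cong: "(\<And>m. m < N \<Longrightarrow> p m = p' m) \<Longrightarrow> Fnl sl N p k = Fnl sl N p' k"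
  unfolding Fnl_def by (intro sum.cong) auto

lemma dFnl_cong:
  "(\<And>m. m < N \<Longrightarrow> p m = p' m) \<Longrightarrow> (\<And>m. m < N \<Longrightarrow> v m = v' m) \<Longrightarrow>
     dFnl sl N p v k = dFnl sl N p' v' k"
  unfolding dFnl_def by (intro sum.cong) auto

lemma Fnorm_nonneg: "0 \<le> Fnorm sl N"
  unfolding Fnorm_def by (intro sum_nonneg) auto

lemma Fcoef_abs_sum_le_Fnorm: "k < N \<Longrightarrow> (\<Sum>m<N. \<Sum>n<N. \<bar>Fcoef sl k m n\<bar>) \<le> Fnorm sl N"
  unfolding Fnorm_def
  by (rule member_le_sum[where f = "\<lambda>k. \<Sum>m<N. \<Sum>n<N. \<bar>Fcoef sl k m n\<bar>"]) (auto intro: sum_nonneg)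

lemma abs_bilinear_Fcoef_le:
  assumes "k < N" and c: "\<And>m n. m < N \<Longrightarrow> n < N \<Longrightarrow> \<bar>t m n\<bar> \<le> C"
  shows "\<bar>\<Sum>m<N. \<Sum>n<N. Fcoef sl k m n * t m n\<bar> \<le> Fnorm sl N * C"
proof -
  have C: "0 \<le> C" if "0 < N"
    using c[of 0 0] that by linarith
  have "\<bar>\<Sum>m<N. \<Sum>n<N. Fcoef sl k m n * t m n\<bar> \<le> (\<Sum>m<N. \<Sum>n<N. \<bar>Fcoef sl k m n\<bar> * C)"
    by (rule order_trans[OF sum_abs], intro sum_mono order_trans[OF sum_abs])
      (simp add: abs_mult mult_left_mono c)
  also have "\<dots> = (\<Sum>m<N. \<Sum>n<N. \<bar>Fcoef sl k m n\<bar>) * C"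
    by (simp add: sum_distrib_right)
  also have "\<dots> \<le> Fnorm sl N * C"
    using Fcoef_abs_sum_le_Fnorm[OF assms(1)] C assms(1) by (simp add: mult_right_mono)
  finally show ?thesis .
qed

lemma abs_Fnl_le:
  assumes "k < N" "\<And>m. m < N \<Longrightarrow> \<bar>v m\<bar> \<le> V"
  shows "\<bar>Fnl sl N v k\<bar> \<le> Fnorm sl N * V\<^sup>2"
  unfolding Fnl_def mult.assoc
proof (rule abs_bilinear_Fcoef_le[OF assms(1)])
  fix m n assume "m < N" "n < N"
  then show "\<bar>v m * v n\<bar> \<le> V\<^sup>2"
    using assms(2) by (simp add: abs_mult power2_eq_square mult_mono')
qed

lemma abs_dFnl_le:
  assumes "k < N" "\<And>m. m < N \<Longrightarrow> \<bar>p m\<bar> \<le> P" "\<And>m. m < N \<Longrightarrow> \<bar>v m\<bar> \<le> V"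
  shows "\<bar>dFnl sl N p v k\<bar> \<le> Fnorm sl N * (2 * P * V)"
  unfolding dFnl_def
proof (rule abs_bilinear_Fcoef_le[OF assms(1)])
  fix m n assume "m < N" "n < N"
  then have "\<bar>p m\<bar> * \<bar>v n\<bar> \<le> P * V" "\<bar>v m\<bar> * \<bar>p n\<bar> \<le> V * P"
    using assms(2,3) by (auto intro!: mult_mono')
  moreover have "V * P = P * V"
    by simp
  ultimately show "\<bar>p m * v n + v m * p n\<bar> \<le> 2 * P * V"
    using abs_triangle_ineq[of "p m * v n" "v m * p n"] unfolding abs_mult by linarith
qed

lemma abs_dFnl_add_Fnl_le:
  assumes "k < N" "\<And>m. m < N \<Longrightarrow> \<bar>p m\<bar> \<le> P" "\<And>m. m < N \<Longrightarrow> \<bar>v m\<bar> \<le> V" "V \<le> W"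
  shows "\<bar>dFnl sl N p v k + Fnl sl N v k\<bar> \<le> Fnorm sl N * (2 * P + W) * V"
proof -
  have V: "0 \<le> V" if "0 < N"
    using assms(3)[of 0] that by linarith
  have "Fnorm sl N * V\<^sup>2 \<le> Fnorm sl N * (W * V)"
    using V assms(1,4) Fnorm_nonneg
    by (intro mult_left_mono) (auto simp: power2_eq_square mult_right_mono)
  moreover have "\<bar>dFnl sl N p v k\<bar> \<le> Fnorm sl N * (2 * P * V)"
    by (rule abs_dFnl_le) (use assms in auto)
  moreover have "\<bar>Fnl sl N v k\<bar> \<le> Fnorm sl N * V\<^sup>2"
    by (rule abs_Fnl_le) (use assms in auto)
  ultimately show ?thesis
    using abs_triangle_ineq[of "dFnl sl N p v k" "Fnl sl N v k"] by (simp add: algebra_simps)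
qed

lemma continuous_on_Fnl:
  "(\<And>m. m < N \<Longrightarrow> continuous_on S (\<lambda>x. p x m)) \<Longrightarrow> continuous_on S (\<lambda>x. Fnl sl N (p x) k)"
  unfolding Fnl_def by (intro continuous_intros) auto

lemma continuous_on_dFnl:
  "(\<And>m. m < N \<Longrightarrow> continuous_on S (\<lambda>x. p x m)) \<Longrightarrow> (\<And>m. m < N \<Longrightarrow> continuous_on S (\<lambda>x. v x m))
     \<Longrightarrow> continuous_on S (\<lambda>x. dFnl sl N (p x) (v x) k)"
  unfolding dFnl_def by (intro continuous_intros) auto

section \<open>Expansion of the functional\<close>

lemma integrable_weighted_sum_mult:
  fixes N :: nat
  assumes "\<And>k. k < N \<Longrightarrow> square_integrable {0..b} (f k)"
    and "\<And>k. k < N \<Longrightarrow> square_integrable {0..b} (g k)"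
  shows "(\<lambda>x. (\<Sum>k<N. f k x * g k x) * weight lam x) integrable_on {0..b}"
proof -
  have "(\<lambda>x. \<Sum>k<N. f k x * (weight lam x * g k x)) integrable_on {0..b}"
    using assms
    by (intro integrable_sum finite_lessThan square_integrable_mult_integrable
        square_integrable_mult_continuous continuous_on_weight) auto
  then show ?thesis
    by (simp add: sum_distrib_right sum_distrib_left mult_ac)
qed

lemma integrable_weighted_sum_sq:
  fixes N :: nat
  shows "(\<And>k. k < N \<Longrightarrow> square_integrable {0..b} (f k)) \<Longrightarrow>
     (\<lambda>x. (\<Sum>k<N. (f k x)\<^sup>2) * weight lam x) integrable_on {0..b}"
  using integrable_weighted_sum_mult[of N b f f lam] by (simp add: power2_eq_square)

definition d1v :: "real \<Rightarrow> (nat \<Rightarrow> real \<Rightarrow> real) \<Rightarrow> real \<Rightarrow> nat \<Rightarrow> real" where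
  "d1v b Q x = (\<lambda>m. d1 b (Q m) x)"

definition residual :: "real \<Rightarrow> real \<Rightarrow> nat \<Rightarrow> (nat \<Rightarrow> real \<Rightarrow> real) \<Rightarrow> nat \<Rightarrow> real \<Rightarrow> real" where
  "residual sl b N Q k x = d2 b (Q k) x + Fnl sl N (d1v b Q x) k"

definition Jbar_deriv :: "real \<Rightarrow> real \<Rightarrow> nat \<Rightarrow> real \<Rightarrow> (nat \<Rightarrow> real \<Rightarrow> real)
    \<Rightarrow> (nat \<Rightarrow> real \<Rightarrow> real) \<Rightarrow> real" where
  "Jbar_deriv sl b N lam Q h = integral {0..b} (\<lambda>x.
     (\<Sum>k<N. 2 * residual sl b N Q k x * (d2 b (h k) x + dFnl sl N (d1v b Q x) (d1v b h x) k))
       * weight lam x)"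

definition Jbar_rem :: "real \<Rightarrow> real \<Rightarrow> nat \<Rightarrow> real \<Rightarrow> (nat \<Rightarrow> real \<Rightarrow> real)
    \<Rightarrow> (nat \<Rightarrow> real \<Rightarrow> real) \<Rightarrow> real" where
  "Jbar_rem sl b N lam Q h = integral {0..b} (\<lambda>x.
     (\<Sum>k<N. (d2 b (h k) x + dFnl sl N (d1v b Q x) (d1v b h x) k + Fnl sl N (d1v b h x) k)\<^sup>2
        + 2 * residual sl b N Q k x * Fnl sl N (d1v b h x) k) * weight lam x)"

lemma Jbar_eq: "Jbar sl b N lam Q = integral {0..b} (\<lambda>x. (\<Sum>k<N. (residual sl b N Q k x)\<^sup>2) * weight lam x)"
  unfolding Jbar_def residual_def d1v_def weight_def ..

lemma continuous_on_d1v: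
  "H2vec b N Q \<Longrightarrow> 0 \<le> b \<Longrightarrow> m < N \<Longrightarrow> continuous_on {0..b} (\<lambda>x. d1v b Q x m)"
  unfolding d1v_def using continuous_on_d1_H2 H2vec_H2 by blast

lemma square_integrable_Fnl_d1v:
  "H2vec b N Q \<Longrightarrow> 0 \<le> b \<Longrightarrow> square_integrable {0..b} (\<lambda>x. Fnl sl N (d1v b Q x) k)"
  by (intro continuous_on_imp_square_integrable continuous_on_Fnl continuous_on_d1v)

lemma square_integrable_dFnl_d1v:
  "H2vec b N Q \<Longrightarrow> H2vec b N h \<Longrightarrow> 0 \<le> b \<Longrightarrow>
     square_integrable {0..b} (\<lambda>x. dFnl sl N (d1v b Q x) (d1v b h x) k)"
  by (intro continuous_on_imp_square_integrable continuous_on_dFnl continuous_on_d1v)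

lemma square_integrable_d2_H2vec:
  "H2vec b N Q \<Longrightarrow> 0 \<le> b \<Longrightarrow> k < N \<Longrightarrow> square_integrable {0..b} (d2 b (Q k))"
  using square_integrable_d2 H2vec_H2 by blast

lemma square_integrable_residual:
  "H2vec b N Q \<Longrightarrow> 0 \<le> b \<Longrightarrow> k < N \<Longrightarrow> square_integrable {0..b} (residual sl b N Q k)"
  unfolding residual_def
  by (intro square_integrable_add square_integrable_Fnl_d1v square_integrable_d2_H2vec) auto

lemma d1v_vadd:
  assumes "H2vec b N Q" "H2vec b N h" "0 < b" "x \<in> {0..b}" "m < N"
  shows "d1v b (vadd Q h) x m = d1v b Q x m + d1v b h x m"
  using d1_lincomb(2)[OF H2vec_H2[OF assms(1,5)] H2vec_H2[OF assms(2,5)] assms(3,4), of 1 1]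
  unfolding d1v_def vadd_def by simp

lemma residual_vadd:
  assumes Q: "H2vec b N Q" and h: "H2vec b N h" and b: "0 < b" and x: "x \<in> {0..b}"
    and d2: "d2 b (vadd Q h k) x = d2 b (Q k) x + d2 b (h k) x"
  shows "residual sl b N (vadd Q h) k x = residual sl b N Q k x + d2 b (h k) x
           + dFnl sl N (d1v b Q x) (d1v b h x) k + Fnl sl N (d1v b h x) k"
proof -
  have "Fnl sl N (d1v b (vadd Q h) x) k = Fnl sl N (\<lambda>m. d1v b Q x m + d1v b h x m) k"
    using d1v_vadd[OF Q h b x] by (intro Fnl_cong) auto
  then show ?thesis
    unfolding residual_def d2 Fnl_add by simp
qed

lemma Jbar_expansion:
  assumes Q: "H2vec b N Q" and h: "H2vec b N h" and b: "0 < b"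
  shows "Jbar sl b N lam (vadd Q h) - Jbar sl b N lam Q - Jbar_deriv sl b N lam Q h
           = Jbar_rem sl b N lam Q h"
proof -
  let ?r = "\<lambda>k x. residual sl b N Q k x"
  let ?H = "\<lambda>k x. d2 b (h k) x"
  let ?D = "\<lambda>k x. dFnl sl N (d1v b Q x) (d1v b h x) k"
  let ?F = "\<lambda>k x. Fnl sl N (d1v b h x) k"
  let ?S = "\<Union>k<N. {x\<in>{0..b}. d2 b (\<lambda>x. Q k x + h k x) x \<noteq> d2 b (Q k) x + d2 b (h k) x}"
  have S: "negligible ?S"
    using negligible_d2_lincomb_vec[OF Q h b, of 1 1] by simp
  have sq: "square_integrable {0..b} (?r k)" "square_integrable {0..b} (?H k)"
    "square_integrable {0..b} (?D k)" "square_integrable {0..b} (?F k)" if "k < N" for k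
    using that Q h b square_integrable_residual square_integrable_d2_H2vec
      square_integrable_dFnl_d1v square_integrable_Fnl_d1v by auto
  have "Jbar sl b N lam (vadd Q h)
      = integral {0..b} (\<lambda>x. (\<Sum>k<N. (?r k x + ?H k x + ?D k x + ?F k x)\<^sup>2) * weight lam x)"
    unfolding Jbar_eq
  proof (rule integral_spike[OF S])
    fix x assume x: "x \<in> {0..b} - ?S"
    have "residual sl b N (vadd Q h) k x = ?r k x + ?H k x + ?D k x + ?F k x" if "k < N" for k
      using x that by (intro residual_vadd[OF Q h b]) (auto simp: vadd_def)
    then show "(\<Sum>k<N. (?r k x + ?H k x + ?D k x + ?F k x)\<^sup>2) * weight lam x
        = (\<Sum>k<N. (residual sl b N (vadd Q h) k x)\<^sup>2) * weight lam x"
      by simp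
  qed
  moreover have "(\<lambda>x. (\<Sum>k<N. (?r k x + ?H k x + ?D k x + ?F k x)\<^sup>2) * weight lam x) integrable_on {0..b}"
    using sq by (intro integrable_weighted_sum_sq square_integrable_add) auto
  moreover have "(\<lambda>x. (\<Sum>k<N. (?r k x)\<^sup>2) * weight lam x) integrable_on {0..b}"
    using sq by (intro integrable_weighted_sum_sq) auto
  moreover have "(\<lambda>x. (\<Sum>k<N. 2 * ?r k x * (?H k x + ?D k x)) * weight lam x) integrable_on {0..b}"
    using integrable_weighted_sum_mult[of N b "\<lambda>k x. 2 * ?r k x" "\<lambda>k x. ?H k x + ?D k x" lam] sq
    by (simp add: square_integrable_cmult square_integrable_add)
  moreover have "(\<Sum>k<N. (?r k x + ?H k x + ?D k x + ?F k x)\<^sup>2) * weight lam x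
      - (\<Sum>k<N. (?r k x)\<^sup>2) * weight lam x - (\<Sum>k<N. 2 * ?r k x * (?H k x + ?D k x)) * weight lam x
      = (\<Sum>k<N. (?H k x + ?D k x + ?F k x)\<^sup>2 + 2 * ?r k x * ?F k x) * weight lam x" for x
  proof -
    have "(?r k x + ?H k x + ?D k x + ?F k x)\<^sup>2 - (?r k x)\<^sup>2 - 2 * ?r k x * (?H k x + ?D k x)
        = (?H k x + ?D k x + ?F k x)\<^sup>2 + 2 * ?r k x * ?F k x" for k
      by (simp add: power2_eq_square algebra_simps)
    then show ?thesis
      by (simp add: sum_subtractf[symmetric] left_diff_distrib[symmetric])
  qed
  ultimately show ?thesis
    unfolding Jbar_eq[of sl b N lam Q] Jbar_deriv_def Jbar_rem_def
    by (simp add: integral_diff[symmetric] integrable_diff)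
qed

lemma square_plus_cross_bounds:
  fixes H B A F w :: real
  assumes "0 \<le> w"
  shows "H\<^sup>2 * w / 2 - B\<^sup>2 * w - (1 + A\<^sup>2) * (\<bar>F\<bar> * w) \<le> (H + B)\<^sup>2 * w + 2 * A * F * w"
    and "(H + B)\<^sup>2 * w + 2 * A * F * w \<le> 2 * H\<^sup>2 * w + 2 * B\<^sup>2 * w + (1 + A\<^sup>2) * (\<bar>F\<bar> * w)"
proof -
  have sq: "H\<^sup>2 / 2 - B\<^sup>2 \<le> (H + B)\<^sup>2" "(H + B)\<^sup>2 \<le> 2 * H\<^sup>2 + 2 * B\<^sup>2"
    using zero_le_power2[of "H + 2 * B"] zero_le_power2[of "H - B"]
    by (simp_all add: power2_eq_square algebra_simps)
  have "2 * \<bar>A\<bar> \<le> 1 + A\<^sup>2"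
    using zero_le_power2[of "\<bar>A\<bar> - 1"] by (simp add: power2_eq_square algebra_simps)
  then have "2 * \<bar>A\<bar> * \<bar>F\<bar> \<le> (1 + A\<^sup>2) * \<bar>F\<bar>"
    by (rule mult_right_mono) simp
  then have "\<bar>2 * A * F\<bar> \<le> (1 + A\<^sup>2) * \<bar>F\<bar>"
    by (simp add: abs_mult)
  then have cross: "- ((1 + A\<^sup>2) * \<bar>F\<bar>) \<le> 2 * A * F" "2 * A * F \<le> (1 + A\<^sup>2) * \<bar>F\<bar>"
    by linarith+
  show "H\<^sup>2 * w / 2 - B\<^sup>2 * w - (1 + A\<^sup>2) * (\<bar>F\<bar> * w) \<le> (H + B)\<^sup>2 * w + 2 * A * F * w"
    using mult_right_mono[OF sq(1) assms] mult_right_mono[OF cross(1) assms]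
    by (simp add: algebra_simps)
  show "(H + B)\<^sup>2 * w + 2 * A * F * w \<le> 2 * H\<^sup>2 * w + 2 * B\<^sup>2 * w + (1 + A\<^sup>2) * (\<bar>F\<bar> * w)"
    using mult_right_mono[OF sq(2) assms] mult_right_mono[OF cross(2) assms]
    by (simp add: algebra_simps)
qed

lemma sum_abs_bounds:
  fixes v :: "nat \<Rightarrow> real" and N :: nat
  assumes e: "0 < e" and W: "\<And>m. m < N \<Longrightarrow> \<bar>v m\<bar> \<le> W"
    and \<sigma>: "\<And>m. m < N \<Longrightarrow> \<bar>v m\<bar> * e \<le> \<sigma>"
  shows "(\<Sum>m<N. \<bar>v m\<bar>) \<le> real N * W" and "(\<Sum>m<N. \<bar>v m\<bar>)\<^sup>2 * e\<^sup>2 \<le> (real N)\<^sup>2 * \<sigma>\<^sup>2"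
proof -
  show "(\<Sum>m<N. \<bar>v m\<bar>) \<le> real N * W"
    using sum_bounded_above[of "{..<N}" "\<lambda>m. \<bar>v m\<bar>" W] W by simp
  have "(\<Sum>m<N. \<bar>v m\<bar>) * e = (\<Sum>m<N. \<bar>v m\<bar> * e)"
    by (simp add: sum_distrib_right)
  also have "\<dots> \<le> real N * \<sigma>"
    using sum_bounded_above[of "{..<N}" "\<lambda>m. \<bar>v m\<bar> * e" \<sigma>] \<sigma> by simp
  finally have "((\<Sum>m<N. \<bar>v m\<bar>) * e)\<^sup>2 \<le> (real N * \<sigma>)\<^sup>2"
    using e by (intro power_mono) (auto intro: sum_nonneg)
  then show "(\<Sum>m<N. \<bar>v m\<bar>)\<^sup>2 * e\<^sup>2 \<le> (real N)\<^sup>2 * \<sigma>\<^sup>2"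
    by (simp add: power_mult_distrib)
qed

text \<open>Pointwise, the weight only ever meets the first derivatives through the products
  |v m| e^{-\<lambda>x}, which is what the Carleman estimate controls.\<close>

lemma remainder_density_bounds:
  fixes p v :: "nat \<Rightarrow> real" and N :: nat and sl H A :: real
  assumes k: "k < N" and e: "0 < e"
    and P: "\<And>m. m < N \<Longrightarrow> \<bar>p m\<bar> \<le> P" and W: "\<And>m. m < N \<Longrightarrow> \<bar>v m\<bar> \<le> W"
    and \<sigma>: "\<And>m. m < N \<Longrightarrow> \<bar>v m\<bar> * e \<le> \<sigma>"
  defines "\<beta> \<equiv> (Fnorm sl N * (2 * P + real N * W))\<^sup>2 * (real N)\<^sup>2 * \<sigma>\<^sup>2"
    and "\<gamma> \<equiv> Fnorm sl N * (real N)\<^sup>2 * \<sigma>\<^sup>2"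
    and "T \<equiv> (H + dFnl sl N p v k + Fnl sl N v k)\<^sup>2 * e\<^sup>2 + 2 * A * Fnl sl N v k * e\<^sup>2"
  shows "H\<^sup>2 * e\<^sup>2 / 2 - \<beta> - (1 + A\<^sup>2) * \<gamma> \<le> T"
    and "T \<le> 2 * H\<^sup>2 * e\<^sup>2 + 2 * \<beta> + (1 + A\<^sup>2) * \<gamma>"
proof -
  define V where "V = (\<Sum>m<N. \<bar>v m\<bar>)"
  have vV: "\<bar>v m\<bar> \<le> V" if "m < N" for m
    unfolding V_def using that by (intro member_le_sum) auto
  note V = sum_abs_bounds[where N = N and v = v, OF e W \<sigma>, folded V_def]
  let ?B = "dFnl sl N p v k + Fnl sl N v k"
  let ?F = "Fnl sl N v k"
  define c where "c = Fnorm sl N * (2 * P + real N * W)"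
  have "\<bar>?B\<bar> \<le> c * V"
    unfolding c_def by (rule abs_dFnl_add_Fnl_le[OF k P vV V(1)])
  then have "?B\<^sup>2 \<le> (c * V)\<^sup>2"
    using power2_le_iff_abs_le[of "c * V" ?B] order_trans[OF abs_ge_zero] by blast
  then have "?B\<^sup>2 * e\<^sup>2 \<le> (c * V)\<^sup>2 * e\<^sup>2"
    by (rule mult_right_mono) (rule zero_le_power2)
  also have "\<dots> = c\<^sup>2 * (V\<^sup>2 * e\<^sup>2)"
    by (simp add: power_mult_distrib)
  also have "\<dots> \<le> c\<^sup>2 * ((real N)\<^sup>2 * \<sigma>\<^sup>2)"
    using mult_left_mono[OF V(2), of "c\<^sup>2"] by simp
  finally have B: "?B\<^sup>2 * e\<^sup>2 \<le> \<beta>"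
    unfolding \<beta>_def c_def by (simp add: mult.assoc)
  have "\<bar>?F\<bar> * e\<^sup>2 \<le> Fnorm sl N * V\<^sup>2 * e\<^sup>2"
    using abs_Fnl_le[OF k vV] by (rule mult_right_mono) simp_all
  also have "\<dots> \<le> Fnorm sl N * ((real N)\<^sup>2 * \<sigma>\<^sup>2)"
    using mult_left_mono[OF V(2) Fnorm_nonneg] by (simp add: mult.assoc)
  finally have F: "\<bar>?F\<bar> * e\<^sup>2 \<le> \<gamma>"
    unfolding \<gamma>_def by (simp add: mult.assoc)
  have A: "(1 + A\<^sup>2) * (\<bar>?F\<bar> * e\<^sup>2) \<le> (1 + A\<^sup>2) * \<gamma>"
    using F by (intro mult_left_mono) auto
  have T: "T = (H + ?B)\<^sup>2 * e\<^sup>2 + 2 * A * ?F * e\<^sup>2"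
    unfolding T_def by (simp add: add.assoc)
  show "H\<^sup>2 * e\<^sup>2 / 2 - \<beta> - (1 + A\<^sup>2) * \<gamma> \<le> T"
    using square_plus_cross_bounds(1)[of "e\<^sup>2" H ?B A ?F] B A unfolding T by simp
  show "T \<le> 2 * H\<^sup>2 * e\<^sup>2 + 2 * \<beta> + (1 + A\<^sup>2) * \<gamma>"
    using square_plus_cross_bounds(2)[of "e\<^sup>2" H ?B A ?F] B A unfolding T by simp
qed

lemma integral_sum_weighted_affine:
  fixes N :: nat and s t u lam :: real
  assumes H: "\<And>k. k < N \<Longrightarrow> square_integrable {0..b} (H k)"
    and A: "\<And>k. k < N \<Longrightarrow> square_integrable {0..b} (A k)" and b: "0 \<le> b"
  defines "f \<equiv> \<lambda>x. \<Sum>k<N. s * ((H k x)\<^sup>2 * weight lam x) + t + u * (1 + (A k x)\<^sup>2)"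
  shows "f integrable_on {0..b}"
    and "integral {0..b} f = s * (\<Sum>k<N. integral {0..b} (\<lambda>x. (H k x)\<^sup>2 * weight lam x))
           + real N * b * t + u * (real N * b + (\<Sum>k<N. integral {0..b} (\<lambda>x. (A k x)\<^sup>2)))"
proof -
  have ints: "(\<lambda>x. (H k x)\<^sup>2 * weight lam x) integrable_on {0..b}" "(\<lambda>x. (A k x)\<^sup>2) integrable_on {0..b}"
    if "k < N" for k
    using integrable_sq_mult_continuous[OF H[OF that] continuous_on_weight]
      square_integrable_integrable_sq[OF A[OF that]] by auto
  have summand: "(\<lambda>x. s * ((H k x)\<^sup>2 * weight lam x) + t + u * (1 + (A k x)\<^sup>2)) integrable_on {0..b}"
    if "k < N" for k
    using ints[OF that] by (intro integrable_add integrable_on_mult_right integrable_const_ivl) auto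
  have summand_integral:
    "integral {0..b} (\<lambda>x. s * ((H k x)\<^sup>2 * weight lam x) + t + u * (1 + (A k x)\<^sup>2))
       = s * integral {0..b} (\<lambda>x. (H k x)\<^sup>2 * weight lam x) + b * t
         + u * (b + integral {0..b} (\<lambda>x. (A k x)\<^sup>2))" if "k < N" for k
  proof (rule integral_unique)
    have const: "((\<lambda>x. t) has_integral b * t) {0..b}" "((\<lambda>x. 1) has_integral b) {0..b}"
      using has_integral_const_real[of t 0 b] has_integral_const_real[of "1::real" 0 b] b
      by simp_all
    show "((\<lambda>x. s * ((H k x)\<^sup>2 * weight lam x) + t + u * (1 + (A k x)\<^sup>2)) has_integral
        s * integral {0..b} (\<lambda>x. (H k x)\<^sup>2 * weight lam x) + b * t
          + u * (b + integral {0..b} (\<lambda>x. (A k x)\<^sup>2))) {0..b}"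
      using ints[OF that]
      by (intro has_integral_add has_integral_mult_right const integrable_integral)
  qed
  show "f integrable_on {0..b}"
    unfolding f_def using summand(1) by (intro integrable_sum) auto
  have "integral {0..b} f = (\<Sum>k<N. s * integral {0..b} (\<lambda>x. (H k x)\<^sup>2 * weight lam x) + b * t
         + u * (b + integral {0..b} (\<lambda>x. (A k x)\<^sup>2)))"
    unfolding f_def using summand summand_integral by (subst integral_sum) auto
  then show "integral {0..b} f = s * (\<Sum>k<N. integral {0..b} (\<lambda>x. (H k x)\<^sup>2 * weight lam x))
           + real N * b * t + u * (real N * b + (\<Sum>k<N. integral {0..b} (\<lambda>x. (A k x)\<^sup>2)))"
    by (simp add: sum.distrib sum_distrib_left algebra_simps)
qed

lemma Jbar_rem_integrable:
  fixes N :: nat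
  assumes Q: "H2vec b N Q" and h: "H2vec b N h" and b: "0 \<le> b"
  shows "(\<lambda>x. (\<Sum>k<N. (d2 b (h k) x + dFnl sl N (d1v b Q x) (d1v b h x) k + Fnl sl N (d1v b h x) k)\<^sup>2
        + 2 * residual sl b N Q k x * Fnl sl N (d1v b h x) k) * weight lam x) integrable_on {0..b}"
proof -
  have "(\<lambda>x. (\<Sum>k<N. (d2 b (h k) x + dFnl sl N (d1v b Q x) (d1v b h x) k + Fnl sl N (d1v b h x) k)\<^sup>2)
      * weight lam x + (\<Sum>k<N. (2 * residual sl b N Q k x) * Fnl sl N (d1v b h x) k) * weight lam x)
      integrable_on {0..b}"
    using Q h b
    by (intro integrable_add integrable_weighted_sum_sq integrable_weighted_sum_mult square_integrable_add
        square_integrable_cmult square_integrable_residual square_integrable_d2_H2vec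
        square_integrable_dFnl_d1v square_integrable_Fnl_d1v) auto
  then show ?thesis
    by (simp add: sum.distrib distrib_right mult.assoc)
qed

lemma Jbar_rem_density_bounds:
  fixes N :: nat and sl lam :: real
  assumes P: "\<And>m. m < N \<Longrightarrow> \<bar>d1 b (Q m) x\<bar> \<le> P"
    and W: "\<And>m. m < N \<Longrightarrow> \<bar>d1 b (h m) x\<bar> \<le> W"
    and \<sigma>: "\<And>m. m < N \<Longrightarrow> \<bar>d1 b (h m) x\<bar> * exp (- lam * x) \<le> \<sigma>"
  defines "\<beta> \<equiv> (Fnorm sl N * (2 * P + real N * W))\<^sup>2 * (real N)\<^sup>2 * \<sigma>\<^sup>2"
    and "\<gamma> \<equiv> Fnorm sl N * (real N)\<^sup>2 * \<sigma>\<^sup>2"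
    and "T \<equiv> (\<Sum>k<N. (d2 b (h k) x + dFnl sl N (d1v b Q x) (d1v b h x) k + Fnl sl N (d1v b h x) k)\<^sup>2
        + 2 * residual sl b N Q k x * Fnl sl N (d1v b h x) k) * weight lam x"
  shows "(\<Sum>k<N. 1/2 * ((d2 b (h k) x)\<^sup>2 * weight lam x) + - \<beta> + - \<gamma> * (1 + (residual sl b N Q k x)\<^sup>2))
           \<le> T"
    and "T \<le> (\<Sum>k<N. 2 * ((d2 b (h k) x)\<^sup>2 * weight lam x) + 2 * \<beta>
                      + \<gamma> * (1 + (residual sl b N Q k x)\<^sup>2))"
proof -
  let ?H = "\<lambda>k. d2 b (h k) x"
  let ?r = "\<lambda>k. residual sl b N Q k x"
  let ?e = "exp (- lam * x)"
  have d1x: "\<And>m. m < N \<Longrightarrow> \<bar>d1v b Q x m\<bar> \<le> P" "\<And>m. m < N \<Longrightarrow> \<bar>d1v b h x m\<bar> \<le> W"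
    "\<And>m. m < N \<Longrightarrow> \<bar>d1v b h x m\<bar> * ?e \<le> \<sigma>"
    using P W \<sigma> unfolding d1v_def by auto
  let ?t = "\<lambda>k. (?H k + dFnl sl N (d1v b Q x) (d1v b h x) k + Fnl sl N (d1v b h x) k)\<^sup>2 * ?e\<^sup>2
      + 2 * ?r k * Fnl sl N (d1v b h x) k * ?e\<^sup>2"
  have bounds: "(?H k)\<^sup>2 * ?e\<^sup>2 / 2 - \<beta> - (1 + (?r k)\<^sup>2) * \<gamma> \<le> ?t k"
    "?t k \<le> 2 * (?H k)\<^sup>2 * ?e\<^sup>2 + 2 * \<beta> + (1 + (?r k)\<^sup>2) * \<gamma>" if "k < N" for k
    using remainder_density_bounds[where sl = sl and H = "?H k" and A = "?r k"
      and p = "d1v b Q x" and v = "d1v b h x", OF that exp_gt_zero d1x]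
    unfolding \<beta>_def \<gamma>_def by blast+
  have T: "T = (\<Sum>k<N. (?H k + dFnl sl N (d1v b Q x) (d1v b h x) k + Fnl sl N (d1v b h x) k)\<^sup>2 * ?e\<^sup>2
      + 2 * ?r k * Fnl sl N (d1v b h x) k * ?e\<^sup>2)"
    unfolding T_def weight_def sum_distrib_right by (simp add: algebra_simps)
  show "(\<Sum>k<N. 1/2 * ((?H k)\<^sup>2 * weight lam x) + - \<beta> + - \<gamma> * (1 + (?r k)\<^sup>2)) \<le> T"
    unfolding T weight_def using bounds(1) by (intro sum_mono) (simp add: algebra_simps)
  show "T \<le> (\<Sum>k<N. 2 * ((?H k)\<^sup>2 * weight lam x) + 2 * \<beta> + \<gamma> * (1 + (?r k)\<^sup>2))"
    unfolding T weight_def using bounds(2) by (intro sum_mono) (simp add: algebra_simps)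
qed

text \<open>The lower bound gives the convexity estimate, the upper one the Fr\'echet remainder.\<close>

lemma Jbar_rem_bounds:
  fixes N :: nat and sl lam :: real
  assumes Q: "H2vec b N Q" and h: "H2vec b N h" and b: "0 < b"
    and P: "\<And>x m. x \<in> {0..b} \<Longrightarrow> m < N \<Longrightarrow> \<bar>d1 b (Q m) x\<bar> \<le> P"
    and W: "\<And>x m. x \<in> {0..b} \<Longrightarrow> m < N \<Longrightarrow> \<bar>d1 b (h m) x\<bar> \<le> W"
    and \<sigma>: "\<And>x m. x \<in> {0..b} \<Longrightarrow> m < N \<Longrightarrow> \<bar>d1 b (h m) x\<bar> * exp (- lam * x) \<le> \<sigma>"
    and a: "\<And>k. k < N \<Longrightarrow> integral {0..b} (\<lambda>x. (residual sl b N Q k x)\<^sup>2) \<le> a"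
  defines "S \<equiv> \<Sum>k<N. integral {0..b} (\<lambda>x. (d2 b (h k) x)\<^sup>2 * weight lam x)"
    and "c \<equiv> (real N)\<^sup>2 * (2 * real N * b * (Fnorm sl N * (2 * P + real N * W))\<^sup>2
                         + Fnorm sl N * real N * (b + a))"
  shows "S / 2 - c * \<sigma>\<^sup>2 \<le> Jbar_rem sl b N lam Q h" and "Jbar_rem sl b N lam Q h \<le> 2 * S + c * \<sigma>\<^sup>2"
proof -
  define \<beta> where "\<beta> = (Fnorm sl N * (2 * P + real N * W))\<^sup>2 * (real N)\<^sup>2 * \<sigma>\<^sup>2"
  define \<gamma> where "\<gamma> = Fnorm sl N * (real N)\<^sup>2 * \<sigma>\<^sup>2"
  let ?r = "\<lambda>k x. residual sl b N Q k x"
  let ?H = "\<lambda>k x. d2 b (h k) x"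
  let ?T = "\<lambda>x. (\<Sum>k<N. (?H k x + dFnl sl N (d1v b Q x) (d1v b h x) k + Fnl sl N (d1v b h x) k)\<^sup>2
        + 2 * ?r k x * Fnl sl N (d1v b h x) k) * weight lam x"
  let ?aff = "\<lambda>s t u x. \<Sum>k<N. s * ((?H k x)\<^sup>2 * weight lam x) + t + u * (1 + (?r k x)\<^sup>2)"
  have sq: "square_integrable {0..b} (?H k)" "square_integrable {0..b} (?r k)" if "k < N" for k
    using that Q h b square_integrable_d2_H2vec square_integrable_residual by auto
  note aff = integral_sum_weighted_affine[of N b ?H ?r, OF sq(1) sq(2) less_imp_le[OF b]]
  have T: "?T integrable_on {0..b}"
    using Jbar_rem_integrable[OF Q h less_imp_le[OF b]] .
  have \<beta>\<gamma>: "0 \<le> \<beta>" "0 \<le> \<gamma>"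
    unfolding \<beta>_def \<gamma>_def using Fnorm_nonneg by auto
  have sumJ: "(\<Sum>k<N. integral {0..b} (\<lambda>x. (?r k x)\<^sup>2)) \<le> real N * a"
    using sum_bounded_above[of "{..<N}" _ a] a by simp
  have c: "c * \<sigma>\<^sup>2 = 2 * real N * b * \<beta> + \<gamma> * (real N * (b + a))"
    unfolding c_def \<beta>_def \<gamma>_def by (simp add: algebra_simps)
  have pointwise: "?aff (1/2) (- \<beta>) (- \<gamma>) x \<le> ?T x \<and> ?T x \<le> ?aff 2 (2 * \<beta>) \<gamma> x"
    if x: "x \<in> {0..b}" for x
    using Jbar_rem_density_bounds[where N = N and Q = Q and h = h and sl = sl, OF P[OF x] W[OF x] \<sigma>[OF x]]
    unfolding \<beta>_def \<gamma>_def by blast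
  have "integral {0..b} (?aff (1/2) (- \<beta>) (- \<gamma>)) \<le> integral {0..b} ?T"
    using pointwise by (intro integral_le aff(1) T) auto
  moreover have "integral {0..b} ?T \<le> integral {0..b} (?aff 2 (2 * \<beta>) \<gamma>)"
    using pointwise by (intro integral_le aff(1) T) auto
  moreover have "integral {0..b} (?aff (1/2) (- \<beta>) (- \<gamma>))
      = 1/2 * S + real N * b * (- \<beta>) + (- \<gamma>) * (real N * b + (\<Sum>k<N. integral {0..b} (\<lambda>x. (?r k x)\<^sup>2)))"
    unfolding S_def by (rule aff(2))
  moreover have "integral {0..b} (?aff 2 (2 * \<beta>) \<gamma>)
      = 2 * S + real N * b * (2 * \<beta>) + \<gamma> * (real N * b + (\<Sum>k<N. integral {0..b} (\<lambda>x. (?r k x)\<^sup>2)))"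
    unfolding S_def by (rule aff(2))
  moreover have "\<gamma> * (\<Sum>k<N. integral {0..b} (\<lambda>x. (?r k x)\<^sup>2)) \<le> \<gamma> * (real N * a)"
    by (rule mult_left_mono[OF sumJ \<beta>\<gamma>(2)])
  moreover have "0 \<le> real N * b * \<beta>"
    using b \<beta>\<gamma> by simp
  ultimately show "S / 2 - c * \<sigma>\<^sup>2 \<le> Jbar_rem sl b N lam Q h" "Jbar_rem sl b N lam Q h \<le> 2 * S + c * \<sigma>\<^sup>2"
    unfolding Jbar_rem_def c by (simp_all add: algebra_simps)
qed

section \<open>The Fr\'echet derivative\<close>

lemma weighted_d2_sq_bounds:
  assumes "H2 b q" "0 \<le> b" "0 \<le> lam"
  shows "exp (- 2 * lam * b) * d2_sq b q \<le> integral {0..b} (\<lambda>x. (d2 b q x)\<^sup>2 * weight lam x)"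
    and "integral {0..b} (\<lambda>x. (d2 b q x)\<^sup>2 * weight lam x) \<le> d2_sq b q"
    and "0 \<le> integral {0..b} (\<lambda>x. (d2 b q x)\<^sup>2 * weight lam x)"
proof -
  have sq: "(\<lambda>x. (d2 b q x)\<^sup>2) integrable_on {0..b}"
    "(\<lambda>x. (d2 b q x)\<^sup>2 * weight lam x) integrable_on {0..b}"
    using square_integrable_d2[OF assms(1,2)]
    by (auto intro: square_integrable_integrable_sq integrable_sq_mult_continuous continuous_on_weight)
  show "exp (- 2 * lam * b) * d2_sq b q \<le> integral {0..b} (\<lambda>x. (d2 b q x)\<^sup>2 * weight lam x)"
    unfolding d2_sq_def integral_mult_right[symmetric]
  proof (intro integral_le integrable_on_mult_right sq)
    fix x assume "x \<in> {0..b}"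
    then show "exp (- 2 * lam * b) * (d2 b q x)\<^sup>2 \<le> (d2 b q x)\<^sup>2 * weight lam x"
      using mult_left_mono[OF weight_ge[OF assms(3), of x b] zero_le_power2[of "d2 b q x"]]
      by (simp add: mult.commute)
  qed
  show "integral {0..b} (\<lambda>x. (d2 b q x)\<^sup>2 * weight lam x) \<le> d2_sq b q"
    unfolding d2_sq_def using sq weight_le_1[OF assms(3)]
    by (intro integral_le) (auto simp: mult_left_le)
  show "0 \<le> integral {0..b} (\<lambda>x. (d2 b q x)\<^sup>2 * weight lam x)"
    using sq(2) by (rule integral_nonneg) (simp add: less_imp_le[OF weight_pos])
qed

lemma bounded_d1_H2vec:
  fixes N :: nat
  assumes "H2vec b N Q" "0 \<le> b"
  obtains P where "0 \<le> P" "\<And>x m. x \<in> {0..b} \<Longrightarrow> m < N \<Longrightarrow> \<bar>d1 b (Q m) x\<bar> \<le> P"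
proof -
  have "\<exists>B. \<forall>x\<in>{0..b}. \<bar>d1 b (Q m) x\<bar> \<le> B" if "m < N" for m
    using compact_imp_bounded[OF compact_continuous_image[OF
        continuous_on_d1_H2[OF H2vec_H2[OF assms(1) that] assms(2)] compact_Icc]]
    unfolding bounded_iff by force
  then obtain B where B: "\<And>m x. m < N \<Longrightarrow> x \<in> {0..b} \<Longrightarrow> \<bar>d1 b (Q m) x\<bar> \<le> B m"
    by metis
  show ?thesis
  proof
    show "0 \<le> (\<Sum>m<N. \<bar>B m\<bar>)"
      by (simp add: sum_nonneg)
    fix x m assume "x \<in> {0..b}" "m < N"
    then show "\<bar>d1 b (Q m) x\<bar> \<le> (\<Sum>m<N. \<bar>B m\<bar>)"
      using B member_le_sum[of m "{..<N}" "\<lambda>m. \<bar>B m\<bar>"] by force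
  qed
qed

lemma Jbar_deriv_lincomb:
  assumes b: "0 < b" and Q: "H2vec b N Q" and h1: "H2vec b N h1" and h2: "H2vec b N h2"
  shows "Jbar_deriv sl b N lam Q (\<lambda>n x. a * h1 n x + c * h2 n x)
           = a * Jbar_deriv sl b N lam Q h1 + c * Jbar_deriv sl b N lam Q h2"
proof -
  let ?h = "\<lambda>n x. a * h1 n x + c * h2 n x"
  let ?E = "\<lambda>h x. (\<Sum>k<N. 2 * residual sl b N Q k x * (d2 b (h k) x + dFnl sl N (d1v b Q x) (d1v b h x) k))
      * weight lam x"
  let ?S = "\<Union>k<N. {x\<in>{0..b}. d2 b (\<lambda>x. a * h1 k x + c * h2 k x) x \<noteq> a * d2 b (h1 k) x + c * d2 b (h2 k) x}"
  have "integral {0..b} (?E ?h) = integral {0..b} (\<lambda>x. a * ?E h1 x + c * ?E h2 x)"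
  proof (rule integral_spike[OF negligible_d2_lincomb_vec[OF h1 h2 b]])
    fix x assume x: "x \<in> {0..b} - ?S"
    have "d1v b ?h x m = a * d1v b h1 x m + c * d1v b h2 x m" if "m < N" for m
      using d1_lincomb(2)[OF H2vec_H2[OF h1 that] H2vec_H2[OF h2 that] b] x unfolding d1v_def by auto
    then have "dFnl sl N (d1v b Q x) (d1v b ?h x) k
        = a * dFnl sl N (d1v b Q x) (d1v b h1 x) k + c * dFnl sl N (d1v b Q x) (d1v b h2 x) k" for k
      using dFnl_cong[of N "d1v b Q x" _ "d1v b ?h x" "\<lambda>m. a * d1v b h1 x m + c * d1v b h2 x m"]
      by (simp add: dFnl_lincomb)
    moreover have "d2 b (?h k) x = a * d2 b (h1 k) x + c * d2 b (h2 k) x" if "k < N" for k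
      using x that by auto
    ultimately show "a * ?E h1 x + c * ?E h2 x = ?E ?h x"
      by (simp add: sum_distrib_left sum_distrib_right sum.distrib[symmetric] algebra_simps)
  qed
  moreover have "?E h integrable_on {0..b}" if "H2vec b N h" for h
    using integrable_weighted_sum_mult[of N b "\<lambda>k x. 2 * residual sl b N Q k x"
        "\<lambda>k x. d2 b (h k) x + dFnl sl N (d1v b Q x) (d1v b h x) k" lam] that Q b
    by (simp add: square_integrable_cmult square_integrable_residual square_integrable_add
        square_integrable_d2_H2vec square_integrable_dFnl_d1v)
  ultimately show ?thesis
    unfolding Jbar_deriv_def using h1 h2 by (simp add: integral_add integrable_on_mult_right)
qed

lemma integral_sq_d2_dFnl_le:
  assumes Q: "H2vec b N Q" and h: "H0vec b N h" and b: "0 < b" and lam: "0 \<le> lam" and k: "k < N"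
    and P: "\<And>x m. x \<in> {0..b} \<Longrightarrow> m < N \<Longrightarrow> \<bar>d1 b (Q m) x\<bar> \<le> P"
  shows "integral {0..b} (\<lambda>x. ((d2 b (h k) x + dFnl sl N (d1v b Q x) (d1v b h x) k) * weight lam x)\<^sup>2)
           \<le> (2 + 8 * b\<^sup>2 * (Fnorm sl N * P)\<^sup>2) * (H2norm b N h)\<^sup>2"
proof -
  let ?H = "d2 b (h k)"
  let ?D = "\<lambda>x. dFnl sl N (d1v b Q x) (d1v b h x) k"
  define \<nu> where "\<nu> = H2norm b N h"
  have hv: "H2vec b N h" using H0vec_H2vec[OF h] .
  have sH: "square_integrable {0..b} ?H" and sD: "square_integrable {0..b} ?D"
    using square_integrable_d2_H2vec[OF hv _ k] square_integrable_dFnl_d1v[OF Q hv] b by auto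
  have D: "(?D x)\<^sup>2 \<le> 4 * b * (Fnorm sl N * P)\<^sup>2 * \<nu>\<^sup>2" if x: "x \<in> {0..b}" for x
  proof -
    have "\<bar>?D x\<bar> \<le> Fnorm sl N * (2 * P * (sqrt b * \<nu>))"
      using abs_d1_le_H2norm[OF hv b _ _ x] h P[OF x] unfolding H0vec_def \<nu>_def d1v_def
      by (intro abs_dFnl_le k) auto
    then have "(?D x)\<^sup>2 \<le> (Fnorm sl N * (2 * P * (sqrt b * \<nu>)))\<^sup>2"
      using power2_le_iff_abs_le order_trans[OF abs_ge_zero] by blast
    then show ?thesis
      using b by (simp add: power_mult_distrib mult_ac)
  qed
  have "integral {0..b} (\<lambda>x. ((?H x + ?D x) * weight lam x)\<^sup>2)
      \<le> integral {0..b} (\<lambda>x. 2 * (?H x)\<^sup>2 + 2 * (4 * b * (Fnorm sl N * P)\<^sup>2 * \<nu>\<^sup>2))"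
  proof (rule integral_le)
    show "(\<lambda>x. ((?H x + ?D x) * weight lam x)\<^sup>2) integrable_on {0..b}"
      using square_integrable_mult_continuous[OF square_integrable_add[OF sH sD] continuous_on_weight]
      by (auto simp: mult.commute dest: square_integrable_integrable_sq)
    show "(\<lambda>x. 2 * (?H x)\<^sup>2 + 2 * (4 * b * (Fnorm sl N * P)\<^sup>2 * \<nu>\<^sup>2)) integrable_on {0..b}"
      using square_integrable_integrable_sq[OF sH]
      by (intro integrable_add integrable_on_mult_right integrable_const_ivl)
    fix x assume x: "x \<in> {0..b}"
    have "(weight lam x)\<^sup>2 \<le> 1"
      using weight_le_1[OF lam, of x] weight_pos[of lam x] x by (simp add: power_le_one)
    then have "((?H x + ?D x) * weight lam x)\<^sup>2 \<le> (?H x + ?D x)\<^sup>2"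
      by (simp add: power_mult_distrib mult_left_le)
    also have "\<dots> \<le> 2 * (?H x)\<^sup>2 + 2 * (?D x)\<^sup>2"
      using zero_le_power2[of "?H x - ?D x"] by (simp add: power2_eq_square algebra_simps)
    finally show "((?H x + ?D x) * weight lam x)\<^sup>2 \<le> 2 * (?H x)\<^sup>2 + 2 * (4 * b * (Fnorm sl N * P)\<^sup>2 * \<nu>\<^sup>2)"
      using D[OF x] by linarith
  qed
  also have "\<dots> = 2 * d2_sq b (h k) + b * (2 * (4 * b * (Fnorm sl N * P)\<^sup>2 * \<nu>\<^sup>2))"
    using square_integrable_integrable_sq[OF sH] b unfolding d2_sq_def
    by (subst integral_add) (simp_all add: integrable_on_mult_right integrable_const_ivl)
  also have "\<dots> = 2 * d2_sq b (h k) + 8 * b\<^sup>2 * (Fnorm sl N * P)\<^sup>2 * \<nu>\<^sup>2"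
    by (simp add: power2_eq_square)
  also have "\<dots> \<le> (2 + 8 * b\<^sup>2 * (Fnorm sl N * P)\<^sup>2) * \<nu>\<^sup>2"
    using d2_sq_le_H2norm_sq[OF hv _ k] b unfolding \<nu>_def by (simp add: algebra_simps)
  finally show ?thesis unfolding \<nu>_def .
qed

lemma square_integrable_weighted_d2_dFnl:
  "H2vec b N Q \<Longrightarrow> H2vec b N h \<Longrightarrow> 0 \<le> b \<Longrightarrow> k < N \<Longrightarrow>
     square_integrable {0..b} (\<lambda>x. (d2 b (h k) x + dFnl sl N (d1v b Q x) (d1v b h x) k) * weight lam x)"
  using square_integrable_mult_continuous[OF square_integrable_add[OF square_integrable_d2_H2vec
      square_integrable_dFnl_d1v] continuous_on_weight]
  by (simp add: mult.commute)

lemma abs_integral_residual_mult_le: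
  assumes Q: "H2vec b N Q" and h: "H0vec b N h" and b: "0 < b" and lam: "0 \<le> lam" and k: "k < N"
    and P: "\<And>x m. x \<in> {0..b} \<Longrightarrow> m < N \<Longrightarrow> \<bar>d1 b (Q m) x\<bar> \<le> P"
  shows "\<bar>integral {0..b} (\<lambda>x. residual sl b N Q k x
            * ((d2 b (h k) x + dFnl sl N (d1v b Q x) (d1v b h x) k) * weight lam x))\<bar>
         \<le> sqrt (integral {0..b} (\<lambda>x. (residual sl b N Q k x)\<^sup>2))
            * (sqrt (2 + 8 * b\<^sup>2 * (Fnorm sl N * P)\<^sup>2) * H2norm b N h)"
proof -
  let ?g = "\<lambda>x. (d2 b (h k) x + dFnl sl N (d1v b Q x) (d1v b h x) k) * weight lam x"
  let ?A = "sqrt (integral {0..b} (\<lambda>x. (residual sl b N Q k x)\<^sup>2))"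
  have hv: "H2vec b N h" using H0vec_H2vec[OF h] .
  have r: "square_integrable {0..b} (residual sl b N Q k)"
    using square_integrable_residual[OF Q _ k] b by simp
  have g: "square_integrable {0..b} ?g"
    using square_integrable_weighted_d2_dFnl[OF Q hv _ k] b by simp
  have "sqrt (integral {0..b} (\<lambda>x. (?g x)\<^sup>2))
      \<le> sqrt ((sqrt (2 + 8 * b\<^sup>2 * (Fnorm sl N * P)\<^sup>2) * H2norm b N h)\<^sup>2)"
    using integral_sq_d2_dFnl_le[OF Q h b lam k P] by (simp add: power_mult_distrib)
  then have "?A * sqrt (integral {0..b} (\<lambda>x. (?g x)\<^sup>2))
      \<le> ?A * (sqrt (2 + 8 * b\<^sup>2 * (Fnorm sl N * P)\<^sup>2) * H2norm b N h)"
    using H2norm_nonneg[OF hv] b integral_nonneg[OF square_integrable_integrable_sq[OF r]]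
    by (intro mult_left_mono) simp_all
  moreover have "\<bar>integral {0..b} (\<lambda>x. residual sl b N Q k x * ?g x)\<bar> \<le> ?A * sqrt (integral {0..b} (\<lambda>x. (?g x)\<^sup>2))"
    by (rule abs_integral_mult_le[OF square_integrable_integrable_sq[OF r] square_integrable_integrable_sq[OF g]])
      (rule square_integrable_mult_integrable[OF r g], simp)
  ultimately show ?thesis
    by linarith
qed

lemma Jbar_deriv_eq_sum:
  assumes Q: "H2vec b N Q" and h: "H2vec b N h" and b: "0 \<le> b"
  shows "Jbar_deriv sl b N lam Q h = (\<Sum>k<N. 2 * integral {0..b} (\<lambda>x. residual sl b N Q k x
            * ((d2 b (h k) x + dFnl sl N (d1v b Q x) (d1v b h x) k) * weight lam x)))"
proof -
  let ?g = "\<lambda>k x. (d2 b (h k) x + dFnl sl N (d1v b Q x) (d1v b h x) k) * weight lam x"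
  have int: "(\<lambda>x. residual sl b N Q k x * ?g k x) integrable_on {0..b}" if "k < N" for k
    using square_integrable_residual[OF Q b that] square_integrable_weighted_d2_dFnl[OF Q h b that]
    by (intro square_integrable_mult_integrable) auto
  have eq: "(\<Sum>k<N. 2 * residual sl b N Q k x * (d2 b (h k) x + dFnl sl N (d1v b Q x) (d1v b h x) k))
      * weight lam x = (\<Sum>k<N. 2 * (residual sl b N Q k x * ?g k x))" for x
    by (simp add: sum_distrib_left sum_distrib_right mult_ac)
  show ?thesis
    unfolding Jbar_deriv_def eq using int by (subst integral_sum) (auto intro: integrable_on_mult_right)
qed

lemma Jbar_deriv_bounded:
  assumes b: "0 < b" and lam: "0 \<le> lam" and Q: "H2vec b N Q"
  shows "\<exists>K. \<forall>h. H0vec b N h \<longrightarrow> \<bar>Jbar_deriv sl b N lam Q h\<bar> \<le> K * H2norm b N h"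
proof -
  obtain P where P: "\<And>x m. x \<in> {0..b} \<Longrightarrow> m < N \<Longrightarrow> \<bar>d1 b (Q m) x\<bar> \<le> P"
    using bounded_d1_H2vec[OF Q less_imp_le[OF b]] by blast
  define C where "C = sqrt (2 + 8 * b\<^sup>2 * (Fnorm sl N * P)\<^sup>2)"
  define A where "A k = sqrt (integral {0..b} (\<lambda>x. (residual sl b N Q k x)\<^sup>2))" for k
  show ?thesis
  proof (intro exI allI impI)
    fix h assume h: "H0vec b N h"
    have "\<bar>Jbar_deriv sl b N lam Q h\<bar> \<le> (\<Sum>k<N. \<bar>2 * integral {0..b} (\<lambda>x. residual sl b N Q k x
        * ((d2 b (h k) x + dFnl sl N (d1v b Q x) (d1v b h x) k) * weight lam x))\<bar>)"
      unfolding Jbar_deriv_eq_sum[OF Q H0vec_H2vec[OF h] less_imp_le[OF b]] by (rule sum_abs)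
    also have "\<dots> \<le> (\<Sum>k<N. 2 * (A k * (C * H2norm b N h)))"
      using abs_integral_residual_mult_le[OF Q h b lam _ P]
      unfolding A_def C_def by (intro sum_mono) (simp add: abs_mult)
    also have "\<dots> = (\<Sum>k<N. 2 * A k * C) * H2norm b N h"
      unfolding sum_distrib_right by (simp add: mult_ac)
    finally show "\<bar>Jbar_deriv sl b N lam Q h\<bar> \<le> (\<Sum>k<N. 2 * A k * C) * H2norm b N h" .
  qed
qed

lemma sum_weighted_d2_sq_bounds:
  fixes N :: nat
  assumes h: "H2vec b N h" and b: "0 \<le> b" and lam: "0 \<le> lam"
  shows "exp (- 2 * lam * b) * (\<Sum>k<N. d2_sq b (h k))
           \<le> (\<Sum>k<N. integral {0..b} (\<lambda>x. (d2 b (h k) x)\<^sup>2 * weight lam x))"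
    and "(\<Sum>k<N. integral {0..b} (\<lambda>x. (d2 b (h k) x)\<^sup>2 * weight lam x)) \<le> (H2norm b N h)\<^sup>2"
    and "0 \<le> (\<Sum>k<N. integral {0..b} (\<lambda>x. (d2 b (h k) x)\<^sup>2 * weight lam x))"
proof -
  note bounds = weighted_d2_sq_bounds[OF H2vec_H2[OF h] b lam]
  show "exp (- 2 * lam * b) * (\<Sum>k<N. d2_sq b (h k))
      \<le> (\<Sum>k<N. integral {0..b} (\<lambda>x. (d2 b (h k) x)\<^sup>2 * weight lam x))"
    unfolding sum_distrib_left using bounds(1) by (intro sum_mono) auto
  have "(\<Sum>k<N. integral {0..b} (\<lambda>x. (d2 b (h k) x)\<^sup>2 * weight lam x)) \<le> (\<Sum>k<N. d2_sq b (h k))"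
    using bounds(2) by (intro sum_mono) auto
  then show "(\<Sum>k<N. integral {0..b} (\<lambda>x. (d2 b (h k) x)\<^sup>2 * weight lam x)) \<le> (H2norm b N h)\<^sup>2"
    using sum_d2_sq_le_H2norm_sq[OF h b] by linarith
  show "0 \<le> (\<Sum>k<N. integral {0..b} (\<lambda>x. (d2 b (h k) x)\<^sup>2 * weight lam x))"
    using bounds(3) by (intro sum_nonneg) auto
qed

lemma Jbar_rem_le_sq:
  fixes N :: nat
  assumes b: "0 < b" and lam: "0 \<le> lam" and Q: "H2vec b N Q"
  shows "\<exists>K. \<forall>h. H0vec b N h \<longrightarrow> H2norm b N h \<le> 1 \<longrightarrow>
           \<bar>Jbar_rem sl b N lam Q h\<bar> \<le> K * (H2norm b N h)\<^sup>2"
proof -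
  obtain P where P: "\<And>x m. x \<in> {0..b} \<Longrightarrow> m < N \<Longrightarrow> \<bar>d1 b (Q m) x\<bar> \<le> P"
    using bounded_d1_H2vec[OF Q less_imp_le[OF b]] by blast
  define a where "a = (\<Sum>k<N. integral {0..b} (\<lambda>x. (residual sl b N Q k x)\<^sup>2))"
  have a: "integral {0..b} (\<lambda>x. (residual sl b N Q k x)\<^sup>2) \<le> a" if "k < N" for k
    unfolding a_def using that Q b
    by (intro member_le_sum integral_nonneg square_integrable_integrable_sq square_integrable_residual)
      auto
  define c where "c = (real N)\<^sup>2 * (2 * real N * b * (Fnorm sl N * (2 * P + real N * sqrt b))\<^sup>2
                         + Fnorm sl N * real N * (b + a))"
  show ?thesis
  proof (intro exI allI impI)
    fix h assume h: "H0vec b N h" and small: "H2norm b N h \<le> 1"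
    have hv: "H2vec b N h" using H0vec_H2vec[OF h] .
    define \<nu> where "\<nu> = H2norm b N h"
    have \<nu>: "0 \<le> \<nu>" "\<nu> \<le> 1"
      using H2norm_nonneg[OF hv] b small unfolding \<nu>_def by auto
    have d1h: "\<bar>d1 b (h m) x\<bar> \<le> sqrt b * \<nu>" if "x \<in> {0..b}" "m < N" for x m
      using abs_d1_le_H2norm[OF hv b that(2) _ that(1)] h that(2) unfolding H0vec_def \<nu>_def by auto
    have "sqrt b * \<nu> \<le> sqrt b"
      using \<nu>(2) b by simp
    then have W: "\<bar>d1 b (h m) x\<bar> \<le> sqrt b" if "x \<in> {0..b}" "m < N" for x m
      using d1h[OF that] by linarith
    have \<sigma>: "\<bar>d1 b (h m) x\<bar> * exp (- lam * x) \<le> sqrt b * \<nu>" if "x \<in> {0..b}" "m < N" for x m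
      using d1h[OF that] mult_left_le[of "exp (- lam * x)" "\<bar>d1 b (h m) x\<bar>"] lam that(1)
      by (fastforce simp: mult_nonneg_nonneg)
    note rem = Jbar_rem_bounds[OF Q hv b P W \<sigma> a, folded c_def]
    note S = sum_weighted_d2_sq_bounds[OF hv less_imp_le[OF b] lam]
    define S where "S = (\<Sum>k<N. integral {0..b} (\<lambda>x. (d2 b (h k) x)\<^sup>2 * weight lam x))"
    have "(sqrt b * \<nu>)\<^sup>2 = b * \<nu>\<^sup>2"
      using b by (simp add: power_mult_distrib)
    then have "S / 2 - c * (b * \<nu>\<^sup>2) \<le> Jbar_rem sl b N lam Q h"
      "Jbar_rem sl b N lam Q h \<le> 2 * S + c * (b * \<nu>\<^sup>2)" "0 \<le> S" "S \<le> \<nu>\<^sup>2"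
      using rem S(2,3) unfolding S_def \<nu>_def by simp_all
    then have "\<bar>Jbar_rem sl b N lam Q h\<bar> \<le> 2 * \<nu>\<^sup>2 + c * (b * \<nu>\<^sup>2)"
      by linarith
    then have "\<bar>Jbar_rem sl b N lam Q h\<bar> \<le> (2 + c * b) * \<nu>\<^sup>2"
      by (simp add: algebra_simps)
    then show "\<bar>Jbar_rem sl b N lam Q h\<bar> \<le> (2 + c * b) * (H2norm b N h)\<^sup>2"
      unfolding \<nu>_def .
  qed
qed

lemma frechet_H0_Jbar:
  assumes b: "0 < b" and lam: "0 \<le> lam" and Q: "H2vec b N Q"
  shows "frechet_H0 b N (Jbar sl b N lam) Q (Jbar_deriv sl b N lam Q)"
  unfolding frechet_H0_def
proof (intro conjI allI impI)
  show "Jbar_deriv sl b N lam Q (\<lambda>n x. a * h1 n x + c * h2 n x)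
      = a * Jbar_deriv sl b N lam Q h1 + c * Jbar_deriv sl b N lam Q h2"
    if "H0vec b N h1" "H0vec b N h2" for h1 h2 a c
    using Jbar_deriv_lincomb[OF b Q] H0vec_H2vec that by blast
  show "\<exists>K. \<forall>h. H0vec b N h \<longrightarrow> \<bar>Jbar_deriv sl b N lam Q h\<bar> \<le> K * H2norm b N h"
    by (rule Jbar_deriv_bounded[OF b lam Q])
  fix \<epsilon> :: real assume \<epsilon>: "0 < \<epsilon>"
  obtain K where K: "\<And>h. H0vec b N h \<Longrightarrow> H2norm b N h \<le> 1 \<Longrightarrow>
      \<bar>Jbar_rem sl b N lam Q h\<bar> \<le> K * (H2norm b N h)\<^sup>2"
    using Jbar_rem_le_sq[OF b lam Q, of sl] by blast
  define \<delta> where "\<delta> = min 1 (\<epsilon> / (max K 0 + 1))"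
  show "\<exists>\<delta>>0. \<forall>h. H0vec b N h \<longrightarrow> H2norm b N h < \<delta> \<longrightarrow>
      \<bar>Jbar sl b N lam (vadd Q h) - Jbar sl b N lam Q - Jbar_deriv sl b N lam Q h\<bar> \<le> \<epsilon> * H2norm b N h"
  proof (intro exI[of _ \<delta>] conjI allI impI)
    show "0 < \<delta>"
      unfolding \<delta>_def using \<epsilon> by simp
    fix h assume h: "H0vec b N h" and small: "H2norm b N h < \<delta>"
    define \<nu> where "\<nu> = H2norm b N h"
    have \<nu>: "0 \<le> \<nu>" "\<nu> \<le> 1" "(max K 0 + 1) * \<nu> \<le> \<epsilon>"
      using H2norm_nonneg[OF H0vec_H2vec[OF h]] b small
      unfolding \<nu>_def \<delta>_def by (auto simp: field_simps)
    have "\<bar>Jbar sl b N lam (vadd Q h) - Jbar sl b N lam Q - Jbar_deriv sl b N lam Q h\<bar>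
        = \<bar>Jbar_rem sl b N lam Q h\<bar>"
      using Jbar_expansion[OF Q H0vec_H2vec[OF h] b] by simp
    also have "\<dots> \<le> max K 0 * \<nu>\<^sup>2"
      using K[OF h] \<nu>(2) order_trans[OF _ mult_right_mono[OF max.cobounded1 zero_le_power2]]
      unfolding \<nu>_def by blast
    also have "\<dots> \<le> (max K 0 + 1) * \<nu> * \<nu>"
      using \<nu>(1) by (simp add: power2_eq_square algebra_simps)
    also have "\<dots> \<le> \<epsilon> * \<nu>"
      by (rule mult_right_mono[OF \<nu>(3) \<nu>(1)])
    finally show "\<bar>Jbar sl b N lam (vadd Q h) - Jbar sl b N lam Q - Jbar_deriv sl b N lam Q h\<bar>
        \<le> \<epsilon> * H2norm b N h"
      unfolding \<nu>_def .
  qed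
qed

lemma frechet_H0_homogeneous:
  assumes "frechet_H0 b N J Q L" "H0vec b N h"
  shows "L (\<lambda>n x. t * h n x) = t * L h"
proof -
  have "L (\<lambda>n x. t * h n x + 0 * h n x) = t * L h + 0 * L h"
    using assms unfolding frechet_H0_def by blast
  then show ?thesis
    by simp
qed

lemma frechet_H0_vanish:
  assumes "frechet_H0 b N J Q L" "H0vec b N h" "H2norm b N h = 0"
  shows "L h = 0"
proof -
  obtain K where "\<And>h. H0vec b N h \<Longrightarrow> \<bar>L h\<bar> \<le> K * H2norm b N h"
    using assms(1) unfolding frechet_H0_def by blast
  from this[OF assms(2)] show ?thesis
    using assms(3) by simp
qed

text \<open>Two derivatives differ by a linear map that is o(\<parallel>h\<parallel>) on the cone H0, hence vanishes.\<close>

lemma frechet_H0_unique: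
  assumes b: "0 < b" and L1: "frechet_H0 b N J Q L1" and L2: "frechet_H0 b N J Q L2"
    and h: "H0vec b N h"
  shows "L1 h = L2 h"
proof (rule ccontr)
  assume ne: "L1 h \<noteq> L2 h"
  have hv: "H2vec b N h" using H0vec_H2vec[OF h] .
  define \<nu> where "\<nu> = H2norm b N h"
  have \<nu>: "0 < \<nu>"
    using frechet_H0_vanish[OF L1 h] frechet_H0_vanish[OF L2 h] ne H2norm_nonneg[OF hv] b
    unfolding \<nu>_def by (cases "H2norm b N h = 0") auto
  define d where "d = \<bar>L1 h - L2 h\<bar>"
  have d: "0 < d" unfolding d_def using ne by simp
  define \<epsilon> where "\<epsilon> = d / (4 * \<nu>)"
  have \<epsilon>: "0 < \<epsilon>" unfolding \<epsilon>_def using d \<nu> by simp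
  obtain \<delta>1 where \<delta>1: "\<delta>1 > 0" and D1: "\<And>h. H0vec b N h \<Longrightarrow> H2norm b N h < \<delta>1 \<Longrightarrow>
      \<bar>J (vadd Q h) - J Q - L1 h\<bar> \<le> \<epsilon> * H2norm b N h"
    using L1 \<epsilon> unfolding frechet_H0_def by meson
  obtain \<delta>2 where \<delta>2: "\<delta>2 > 0" and D2: "\<And>h. H0vec b N h \<Longrightarrow> H2norm b N h < \<delta>2 \<Longrightarrow>
      \<bar>J (vadd Q h) - J Q - L2 h\<bar> \<le> \<epsilon> * H2norm b N h"
    using L2 \<epsilon> unfolding frechet_H0_def by meson
  define t where "t = min \<delta>1 \<delta>2 / (2 * \<nu>)"
  have t: "0 < t" "t * \<nu> < \<delta>1" "t * \<nu> < \<delta>2"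
    unfolding t_def using \<delta>1 \<delta>2 \<nu> by auto
  let ?th = "\<lambda>n x. t * h n x"
  have th: "H0vec b N ?th" "H2norm b N ?th = t * \<nu>"
    using H0vec_lincomb[OF h h b, of t 0] H2norm_cmult[OF hv b, of t] t(1) unfolding \<nu>_def by simp_all
  have "\<bar>J (vadd Q ?th) - J Q - t * L1 h\<bar> \<le> \<epsilon> * (t * \<nu>)"
    "\<bar>J (vadd Q ?th) - J Q - t * L2 h\<bar> \<le> \<epsilon> * (t * \<nu>)"
    using D1[OF th(1)] D2[OF th(1)] frechet_H0_homogeneous[OF L1 h, of t]
      frechet_H0_homogeneous[OF L2 h, of t] th(2) t by auto
  moreover have "t * d = \<bar>(J (vadd Q ?th) - J Q - t * L2 h) - (J (vadd Q ?th) - J Q - t * L1 h)\<bar>"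
    unfolding d_def using t(1) by (simp add: abs_mult right_diff_distrib[symmetric])
  ultimately have "t * d \<le> 2 * (\<epsilon> * (t * \<nu>))"
    by linarith
  also have "\<dots> = t * (d / 2)"
    unfolding \<epsilon>_def using \<nu> by (simp add: field_simps)
  finally show False
    using t(1) d by simp
qed

section \<open>Strict convexity on G1\<close>

lemma G1_H2vec: "Q \<in> G1 b N R Phi0 Psi0 Psib \<Longrightarrow> H2vec b N Q"
  unfolding G1_def by blast

lemma vdiff_eq_lincomb: "vdiff Q2 Q1 = (\<lambda>n x. 1 * Q2 n x + (- 1) * Q1 n x)"
  unfolding vdiff_def by simp

lemma vadd_vdiff: "vadd Q1 (vdiff Q2 Q1) = Q2"
  unfolding vadd_def vdiff_def by simp

lemma d1_vdiff:
  assumes "H2vec b N Q2" "H2vec b N Q1" "0 < b" "x \<in> {0..b}" "m < N"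
  shows "d1 b (vdiff Q2 Q1 m) x = d1 b (Q2 m) x - d1 b (Q1 m) x"
  using d1_lincomb(2)[OF H2vec_H2[OF assms(1,5)] H2vec_H2[OF assms(2,5)] assms(3,4), of 1 "- 1"]
  unfolding vdiff_eq_lincomb by simp

lemma vdiff_G1_H0vec:
  assumes Q1: "Q1 \<in> G1 b N R Phi0 Psi0 Psib" and Q2: "Q2 \<in> G1 b N R Phi0 Psi0 Psib" and b: "0 < b"
  shows "H0vec b N (vdiff Q2 Q1)"
  unfolding H0vec_def
proof (intro conjI allI impI)
  show "H2vec b N (vdiff Q2 Q1)"
    unfolding vdiff_eq_lincomb using G1_H2vec[OF Q2] G1_H2vec[OF Q1] b by (rule H2vec_lincomb)
  fix n assume n: "n < N"
  show "vdiff Q2 Q1 n 0 = 0"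
    using Q1 Q2 n unfolding G1_def vdiff_def by auto
  show "d1 b (vdiff Q2 Q1 n) 0 = 0" "d1 b (vdiff Q2 Q1 n) b = 0"
    using d1_vdiff[OF G1_H2vec[OF Q2] G1_H2vec[OF Q1] b _ n] Q1 Q2 n b unfolding G1_def by auto
qed

definition d1_bound_G1 :: "real \<Rightarrow> nat \<Rightarrow> real \<Rightarrow> (nat \<Rightarrow> real) \<Rightarrow> real" where
  "d1_bound_G1 b N R Psi0 = (\<Sum>m<N. \<bar>Psi0 m\<bar>) + sqrt b * R"

lemma d1_bound_G1_nonneg: "0 \<le> b \<Longrightarrow> 0 \<le> R \<Longrightarrow> 0 \<le> d1_bound_G1 b N R Psi0"
  unfolding d1_bound_G1_def by (simp add: sum_nonneg)

lemma d2_sq_le_G1: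
  assumes "Q \<in> G1 b N R Phi0 Psi0 Psib" "0 < b" "m < N"
  shows "d2_sq b (Q m) \<le> R\<^sup>2"
proof -
  have "d2_sq b (Q m) \<le> (H2norm b N Q)\<^sup>2"
    using d2_sq_le_H2norm_sq[OF G1_H2vec[OF assms(1)] _ assms(3)] assms(2) by simp
  also have "\<dots> \<le> R\<^sup>2"
    using assms(1) H2norm_nonneg[OF G1_H2vec[OF assms(1)]] assms(2) unfolding G1_def
    by (intro power_mono) auto
  finally show ?thesis .
qed

lemma abs_d1_le_G1:
  assumes Q: "Q \<in> G1 b N R Phi0 Psi0 Psib" and b: "0 < b" and R: "0 < R"
    and x: "x \<in> {0..b}" and m: "m < N"
  shows "\<bar>d1 b (Q m) x\<bar> \<le> d1_bound_G1 b N R Psi0"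
proof -
  have "(d1 b (Q m) x - d1 b (Q m) 0)\<^sup>2 \<le> b * R\<^sup>2"
    using d1_increment_sq_le_d2[OF is_d2_d2[OF H2vec_H2[OF G1_H2vec[OF Q] m]] x]
      mult_left_mono[OF d2_sq_le_G1[OF Q b m], of b] b
    unfolding d2_sq_def by linarith
  then have "\<bar>d1 b (Q m) x - d1 b (Q m) 0\<bar> \<le> sqrt b * R"
    using real_sqrt_le_mono R b by (fastforce simp: real_sqrt_mult)
  moreover have "d1 b (Q m) 0 = Psi0 m"
    using Q m unfolding G1_def by auto
  moreover have "\<bar>Psi0 m\<bar> \<le> (\<Sum>m<N. \<bar>Psi0 m\<bar>)"
    using m by (intro member_le_sum) auto
  ultimately show ?thesis
    unfolding d1_bound_G1_def by linarith
qed

lemma integral_residual_sq_le_G1: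
  assumes Q: "Q \<in> G1 b N R Phi0 Psi0 Psib" and b: "0 < b" and R: "0 < R" and k: "k < N"
  shows "integral {0..b} (\<lambda>x. (residual sl b N Q k x)\<^sup>2)
           \<le> 2 * R\<^sup>2 + 2 * b * (Fnorm sl N * (d1_bound_G1 b N R Psi0)\<^sup>2)\<^sup>2"
proof -
  let ?P = "d1_bound_G1 b N R Psi0"
  let ?c = "(Fnorm sl N * ?P\<^sup>2)\<^sup>2"
  have Qv: "H2vec b N Q" using G1_H2vec[OF Q] .
  have sH: "square_integrable {0..b} (d2 b (Q k))"
    using square_integrable_d2_H2vec[OF Qv _ k] b by simp
  have "integral {0..b} (\<lambda>x. (residual sl b N Q k x)\<^sup>2) \<le> integral {0..b} (\<lambda>x. 2 * (d2 b (Q k) x)\<^sup>2 + 2 * ?c)"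
  proof (rule integral_le)
    show "(\<lambda>x. (residual sl b N Q k x)\<^sup>2) integrable_on {0..b}"
      using square_integrable_residual[OF Qv _ k] b by (simp add: square_integrable_integrable_sq)
    show "(\<lambda>x. 2 * (d2 b (Q k) x)\<^sup>2 + 2 * ?c) integrable_on {0..b}"
      using square_integrable_integrable_sq[OF sH]
      by (intro integrable_add integrable_on_mult_right integrable_const_ivl)
    fix x assume x: "x \<in> {0..b}"
    have "\<bar>Fnl sl N (d1v b Q x) k\<bar> \<le> Fnorm sl N * ?P\<^sup>2"
      using abs_d1_le_G1[OF Q b R x] unfolding d1v_def by (intro abs_Fnl_le k)
    then have "(Fnl sl N (d1v b Q x) k)\<^sup>2 \<le> ?c"
      using power2_le_iff_abs_le order_trans[OF abs_ge_zero] by blast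
    moreover have "(residual sl b N Q k x)\<^sup>2 \<le> 2 * (d2 b (Q k) x)\<^sup>2 + 2 * (Fnl sl N (d1v b Q x) k)\<^sup>2"
      using zero_le_power2[of "d2 b (Q k) x - Fnl sl N (d1v b Q x) k"]
      unfolding residual_def by (simp add: power2_eq_square algebra_simps)
    ultimately show "(residual sl b N Q k x)\<^sup>2 \<le> 2 * (d2 b (Q k) x)\<^sup>2 + 2 * ?c"
      by linarith
  qed
  also have "\<dots> = 2 * d2_sq b (Q k) + b * (2 * ?c)"
    using square_integrable_integrable_sq[OF sH] b unfolding d2_sq_def
    by (subst integral_add) (simp_all add: integrable_on_mult_right integrable_const_ivl)
  also have "\<dots> \<le> 2 * R\<^sup>2 + 2 * b * ?c"
    using d2_sq_le_G1[OF Q b k] by simp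
  finally show ?thesis .
qed

definition convexity_const :: "real \<Rightarrow> real \<Rightarrow> nat \<Rightarrow> real \<Rightarrow> (nat \<Rightarrow> real) \<Rightarrow> real" where
  "convexity_const sl b N R Psi0 =
     (let P = d1_bound_G1 b N R Psi0; a = 2 * R\<^sup>2 + 2 * b * (Fnorm sl N * P\<^sup>2)\<^sup>2
      in (real N)\<^sup>2 * (2 * real N * b * (Fnorm sl N * (2 * P + real N * (2 * P)))\<^sup>2
                      + Fnorm sl N * real N * (b + a)))"

lemma convexity_const_nonneg: "0 \<le> b \<Longrightarrow> 0 \<le> R \<Longrightarrow> 0 \<le> convexity_const sl b N R Psi0"
  unfolding convexity_const_def Let_def
  using Fnorm_nonneg[of sl N] d1_bound_G1_nonneg[of b R N Psi0] by simp

lemma abs_d1_carleman_H0: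
  assumes h: "H0vec b N h" and b: "0 < b" and lam: "0 < lam" and x: "x \<in> {0..b}" and m: "m < N"
  shows "\<bar>d1 b (h m) x\<bar> * exp (- lam * x)
           \<le> sqrt ((\<Sum>k<N. integral {0..b} (\<lambda>x. (d2 b (h k) x)\<^sup>2 * weight lam x)) / (2 * lam))"
proof -
  have hv: "H2vec b N h" using H0vec_H2vec[OF h] .
  have "(d1 b (h m) x)\<^sup>2 * weight lam x \<le> integral {0..b} (\<lambda>x. (d2 b (h m) x)\<^sup>2 * weight lam x) / (2 * lam)"
    using carleman_d1_estimate[OF is_d2_d2[OF H2vec_H2[OF hv m]] x lam] h m unfolding H0vec_def by simp
  also have "\<dots> \<le> (\<Sum>k<N. integral {0..b} (\<lambda>x. (d2 b (h k) x)\<^sup>2 * weight lam x)) / (2 * lam)"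
    using weighted_d2_sq_bounds(3)[OF H2vec_H2[OF hv] _ less_imp_le[OF lam]] m b lam
    by (intro divide_right_mono member_le_sum) auto
  finally have "(\<bar>d1 b (h m) x\<bar> * exp (- lam * x))\<^sup>2
      \<le> (\<Sum>k<N. integral {0..b} (\<lambda>x. (d2 b (h k) x)\<^sup>2 * weight lam x)) / (2 * lam)"
    unfolding weight_def by (simp add: power_mult_distrib)
  from real_sqrt_le_mono[OF this] show ?thesis
    by simp
qed

lemma Jbar_rem_ge_G1:
  assumes Q1: "Q1 \<in> G1 b N R Phi0 Psi0 Psib" and Q2: "Q2 \<in> G1 b N R Phi0 Psi0 Psib"
    and b: "0 < b" and R: "0 < R" and lam: "0 < lam" "2 * convexity_const sl b N R Psi0 \<le> lam"
  shows "(\<Sum>k<N. integral {0..b} (\<lambda>x. (d2 b (vdiff Q2 Q1 k) x)\<^sup>2 * weight lam x)) / 4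
           \<le> Jbar_rem sl b N lam Q1 (vdiff Q2 Q1)"
proof -
  define h where "h = vdiff Q2 Q1"
  define P where "P = d1_bound_G1 b N R Psi0"
  define S where "S = (\<Sum>k<N. integral {0..b} (\<lambda>x. (d2 b (h k) x)\<^sup>2 * weight lam x))"
  define c where "c = convexity_const sl b N R Psi0"
  have h0: "H0vec b N h" unfolding h_def by (rule vdiff_G1_H0vec[OF Q1 Q2 b])
  have hv: "H2vec b N h" using H0vec_H2vec[OF h0] .
  have P1: "\<bar>d1 b (Q1 m) x\<bar> \<le> P" if "x \<in> {0..b}" "m < N" for x m
    unfolding P_def by (rule abs_d1_le_G1[OF Q1 b R that])
  have W: "\<bar>d1 b (h m) x\<bar> \<le> 2 * P" if "x \<in> {0..b}" "m < N" for x m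
    using d1_vdiff[OF G1_H2vec[OF Q2] G1_H2vec[OF Q1] b that] abs_d1_le_G1[OF Q2 b R that] P1[OF that]
    unfolding h_def P_def by linarith
  have \<sigma>: "\<bar>d1 b (h m) x\<bar> * exp (- lam * x) \<le> sqrt (S / (2 * lam))" if "x \<in> {0..b}" "m < N" for x m
    unfolding S_def by (rule abs_d1_carleman_H0[OF h0 b lam(1) that])
  have a: "integral {0..b} (\<lambda>x. (residual sl b N Q1 k x)\<^sup>2) \<le> 2 * R\<^sup>2 + 2 * b * (Fnorm sl N * P\<^sup>2)\<^sup>2"
    if "k < N" for k
    unfolding P_def by (rule integral_residual_sq_le_G1[OF Q1 b R that])
  have S0: "0 \<le> S"
    unfolding S_def by (rule sum_weighted_d2_sq_bounds(3)[OF hv less_imp_le[OF b] less_imp_le[OF lam(1)]])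
  have "S / 2 - c * (sqrt (S / (2 * lam)))\<^sup>2 \<le> Jbar_rem sl b N lam Q1 h"
    using Jbar_rem_bounds(1)[OF G1_H2vec[OF Q1] hv b P1 W \<sigma> a]
    unfolding S_def c_def convexity_const_def P_def Let_def by simp
  moreover have "c * (sqrt (S / (2 * lam)))\<^sup>2 \<le> S / 4"
  proof -
    have "c * (sqrt (S / (2 * lam)))\<^sup>2 = c * S / (2 * lam)"
      using S0 lam by simp
    also have "\<dots> \<le> (lam / 2) * S / (2 * lam)"
      using lam S0 unfolding c_def by (intro divide_right_mono mult_right_mono) auto
    also have "\<dots> = S / 4"
      using lam by simp
    finally show ?thesis .
  qed
  ultimately show ?thesis
    unfolding S_def h_def by linarith
qed

lemma Jbar_rem_ge_H2norm_G1:
  assumes Q1: "Q1 \<in> G1 b N R Phi0 Psi0 Psib" and Q2: "Q2 \<in> G1 b N R Phi0 Psi0 Psib"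
    and b: "0 < b" and R: "0 < R" and lam: "0 < lam" "2 * convexity_const sl b N R Psi0 \<le> lam"
  shows "1 / (4 * (1 + b\<^sup>2 + b ^ 4)) * exp (- 2 * lam * b) * (H2norm b N (vdiff Q2 Q1))\<^sup>2
           \<le> Jbar_rem sl b N lam Q1 (vdiff Q2 Q1)"
proof -
  let ?h = "vdiff Q2 Q1"
  let ?D = "\<Sum>k<N. d2_sq b (?h k)"
  have h0: "H0vec b N ?h" by (rule vdiff_G1_H0vec[OF Q1 Q2 b])
  have C: "0 < 1 + b\<^sup>2 + b ^ 4" using b by (simp add: add_pos_nonneg)
  have "(H2norm b N ?h)\<^sup>2 \<le> (1 + b\<^sup>2 + b ^ 4) * ?D"
    using H2norm_sq_le_sum_d2_sq[OF H0vec_H2vec[OF h0] b] h0 unfolding H0vec_def by blast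
  then have "1 / (4 * (1 + b\<^sup>2 + b ^ 4)) * exp (- 2 * lam * b) * (H2norm b N ?h)\<^sup>2
      \<le> 1 / (4 * (1 + b\<^sup>2 + b ^ 4)) * exp (- 2 * lam * b) * ((1 + b\<^sup>2 + b ^ 4) * ?D)"
    using C by (intro mult_left_mono) auto
  also have "\<dots> = exp (- 2 * lam * b) * ?D / 4"
    using C by (simp add: field_simps)
  also have "\<dots> \<le> (\<Sum>k<N. integral {0..b} (\<lambda>x. (d2 b (?h k) x)\<^sup>2 * weight lam x)) / 4"
    using sum_weighted_d2_sq_bounds(1)[OF H0vec_H2vec[OF h0] less_imp_le[OF b] less_imp_le[OF lam(1)]]
    by simp
  also have "\<dots> \<le> Jbar_rem sl b N lam Q1 ?h"
    by (rule Jbar_rem_ge_G1[OF Q1 Q2 b R lam])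
  finally show ?thesis .
qed

lemma Jbar_convex_G1:
  assumes Q1: "Q1 \<in> G1 b N R Phi0 Psi0 Psib" and Q2: "Q2 \<in> G1 b N R Phi0 Psi0 Psib"
    and b: "0 < b" and R: "0 < R" and lam: "0 < lam" "2 * convexity_const sl b N R Psi0 \<le> lam"
  shows "frechet_H0 b N (Jbar sl b N lam) Q1 (Jbar_deriv sl b N lam Q1)"
    and "frechet_H0 b N (Jbar sl b N lam) Q1 L \<Longrightarrow>
           1 / (4 * (1 + b\<^sup>2 + b ^ 4)) * exp (- 2 * lam * b) * (H2norm b N (vdiff Q2 Q1))\<^sup>2
             \<le> Jbar sl b N lam Q2 - Jbar sl b N lam Q1 - L (vdiff Q2 Q1)"
proof -
  show deriv: "frechet_H0 b N (Jbar sl b N lam) Q1 (Jbar_deriv sl b N lam Q1)"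
    using frechet_H0_Jbar[OF b _ G1_H2vec[OF Q1]] lam by simp
  assume L: "frechet_H0 b N (Jbar sl b N lam) Q1 L"
  have h0: "H0vec b N (vdiff Q2 Q1)" by (rule vdiff_G1_H0vec[OF Q1 Q2 b])
  have "Jbar sl b N lam Q2 - Jbar sl b N lam Q1 - L (vdiff Q2 Q1) = Jbar_rem sl b N lam Q1 (vdiff Q2 Q1)"
    using Jbar_expansion[OF G1_H2vec[OF Q1] H0vec_H2vec[OF h0] b] frechet_H0_unique[OF b L deriv h0]
    by (simp add: vadd_vdiff)
  with Jbar_rem_ge_H2norm_G1[OF Q1 Q2 b R lam]
  show "1 / (4 * (1 + b\<^sup>2 + b ^ 4)) * exp (- 2 * lam * b) * (H2norm b N (vdiff Q2 Q1))\<^sup>2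
      \<le> Jbar sl b N lam Q2 - Jbar sl b N lam Q1 - L (vdiff Q2 Q1)"
    by simp
qed

theorem theorem4:
  fixes sl b R :: real and N :: nat and Phi0 Psi0 Psib :: "nat \<Rightarrow> real"
  assumes "sl > 0" and "b > 0" and "N \<ge> 1" and "R > 0"
  shows "\<exists>lam2 > 1. \<exists>C3 > 0. \<forall>lam \<ge> lam2.
           \<forall>Q1 \<in> G1 b N R Phi0 Psi0 Psib. \<forall>Q2 \<in> G1 b N R Phi0 Psi0 Psib.
             (\<exists>L. frechet_H0 b N (Jbar sl b N lam) Q1 L) \<and>
             (\<forall>L. frechet_H0 b N (Jbar sl b N lam) Q1 L \<longrightarrow>
                Jbar sl b N lam Q2 - Jbar sl b N lam Q1 - L (vdiff Q2 Q1)
                  \<ge> C3 * exp (- 2 * lam * b) * (H2norm b N (vdiff Q2 Q1))\<^sup>2)"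
proof -
  have b: "0 < b" and R: "0 < R" and c: "0 \<le> convexity_const sl b N R Psi0"
    using assms convexity_const_nonneg[of b R sl N Psi0] by auto
  define lam2 where "lam2 = 2 * convexity_const sl b N R Psi0 + 2"
  define C3 where "C3 = 1 / (4 * (1 + b\<^sup>2 + b ^ 4))"
  have "\<exists>L. frechet_H0 b N (Jbar sl b N lam) Q1 L"
    and "frechet_H0 b N (Jbar sl b N lam) Q1 L \<Longrightarrow>
           Jbar sl b N lam Q2 - Jbar sl b N lam Q1 - L (vdiff Q2 Q1)
             \<ge> C3 * exp (- 2 * lam * b) * (H2norm b N (vdiff Q2 Q1))\<^sup>2"
    if "lam2 \<le> lam" "Q1 \<in> G1 b N R Phi0 Psi0 Psib" "Q2 \<in> G1 b N R Phi0 Psi0 Psib" for lam Q1 Q2 L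
    using Jbar_convex_G1[OF that(2,3) b R, of lam sl] that(1) c unfolding lam2_def C3_def by auto
  moreover have "1 < lam2" "0 < C3"
    unfolding lam2_def C3_def using b c by (simp_all add: add_pos_nonneg)
  ultimately show ?thesis
    by blast
qed

end
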